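(* If for every nonzero nonunit $x$ of $D$ the ideal $xD$ is a $\ast$-product of finitely many $\ast$-f-homog ideals, then $D$ is a GCD domain that is a $\ast$-IRKT, and every nonzero nonunit of $D$ is expressible, uniquely up to order and associates, as a product of mutually $\ast$-comaximal $\ast$-f-homog elements. Conversely, if $D$ is a GCD domain that is a $\ast$-IRKT, then every proper nonzero principal ideal of $D$ is a $\ast$-product of finitely many $\ast$-f-homog ideals.
   Context: $\ast$ is a star operation on the integral domain $D$ of finite character. A $\ast$-ideal is a nonzero fractional ideal $I$ with $I^\ast=I$; of finite type if $I=J^\ast$ for some nonzero finitely generated $J$. A maximal $\ast$-ideal is an integral $\ast$-ideal maximal among proper integral $\ast$-ideals. Ideals $A,B$ are $\ast$-comaximal if $(A+B)^\ast=D$. A $\ast$-homog ideal is a proper integral $\ast$-ideal $I$ of finite type such that $(A+B)^\ast\neq D$ for every pair $A,B$ of proper integral $\ast$-ideals of finite type containing $I$. A $\ast$-f-homog ideal is a $\ast$-homog ideal $I$ such that every $\ast$-ideal of finite type containing $I$ (including $I$ itself) is principal; a $\ast$-f-homog element is a generator of a $\ast$-f-homog ideal. $D$ is a $\ast$-IRKT if $D_P$ is a valuation domain for every maximal $\ast$-ideal $P$, $D=\bigcap_P D_P$ over the maximal $\ast$-ideals with the intersection locally finite, and no two distinct maximal $\ast$-ideals contain a common nonzero prime ideal. *)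

theory Defs
  imports Main
begin

text \<open>Setting: the integral domain D is a subring of a field K (the type 'k) that is
  the quotient field of D.  Fractional ideals are subsets of K.\<close>

definition domain_in :: "'k::field set \<Rightarrow> bool" where
  "domain_in D \<longleftrightarrow> 0 \<in> D \<and> 1 \<in> D \<and>
     (\<forall>a\<in>D. \<forall>b\<in>D. a + b \<in> D \<and> a - b \<in> D \<and> a * b \<in> D) \<and>
     (\<forall>z. \<exists>a\<in>D. \<exists>b\<in>D. b \<noteq> 0 \<and> z = a / b)"

definition smul :: "'k::field \<Rightarrow> 'k set \<Rightarrow> 'k set" where
  "smul x I = (\<lambda>y. x * y) ` I"

definition ddvd :: "'k::field set \<Rightarrow> 'k \<Rightarrow> 'k \<Rightarrow> bool" where
  "ddvd D a b \<longleftrightarrow> (\<exists>k\<in>D. b = a * k)"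

definition dunit :: "'k::field set \<Rightarrow> 'k \<Rightarrow> bool" where
  "dunit D x \<longleftrightarrow> x \<in> D \<and> x \<noteq> 0 \<and> inverse x \<in> D"

definition dassoc :: "'k::field set \<Rightarrow> 'k \<Rightarrow> 'k \<Rightarrow> bool" where
  "dassoc D x y \<longleftrightarrow> (\<exists>u. dunit D u \<and> y = u * x)"

definition dspan :: "'k::field set \<Rightarrow> 'k set \<Rightarrow> 'k set" where
  "dspan D S = {y. \<exists>F c. finite F \<and> F \<subseteq> S \<and> (\<forall>s\<in>F. c s \<in> D) \<and> y = (\<Sum>s\<in>F. c s * s)}"

definition dsubmodule :: "'k::field set \<Rightarrow> 'k set \<Rightarrow> bool" where
  "dsubmodule D I \<longleftrightarrow> 0 \<in> I \<and> (\<forall>a\<in>I. \<forall>b\<in>I. a + b \<in> I) \<and> (\<forall>d\<in>D. \<forall>a\<in>I. d * a \<in> I)"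

definition frac_ideal :: "'k::field set \<Rightarrow> 'k set \<Rightarrow> bool" where
  "frac_ideal D I \<longleftrightarrow> dsubmodule D I \<and> I \<noteq> {0} \<and> (\<exists>d\<in>D. d \<noteq> 0 \<and> smul d I \<subseteq> D)"

definition fin_gen :: "'k::field set \<Rightarrow> 'k set \<Rightarrow> bool" where
  "fin_gen D J \<longleftrightarrow> (\<exists>F. finite F \<and> J = dspan D F)"

definition isum :: "'k::field set \<Rightarrow> 'k set \<Rightarrow> 'k set" where
  "isum A B = {a + b | a b. a \<in> A \<and> b \<in> B}"

definition iprod :: "'k::field set \<Rightarrow> 'k set \<Rightarrow> 'k set \<Rightarrow> 'k set" where
  "iprod D A B = dspan D {a * b | a b. a \<in> A \<and> b \<in> B}"

definition iprod_list :: "'k::field set \<Rightarrow> 'k set list \<Rightarrow> 'k set" where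
  "iprod_list D Is = foldr (iprod D) Is D"

definition star_op :: "'k::field set \<Rightarrow> ('k set \<Rightarrow> 'k set) \<Rightarrow> bool" where
  "star_op D st \<longleftrightarrow>
     (\<forall>I. frac_ideal D I \<longrightarrow> frac_ideal D (st I)) \<and>
     (\<forall>x. x \<noteq> 0 \<longrightarrow> st (smul x D) = smul x D) \<and>
     (\<forall>x I. x \<noteq> 0 \<longrightarrow> frac_ideal D I \<longrightarrow> st (smul x I) = smul x (st I)) \<and>
     (\<forall>I. frac_ideal D I \<longrightarrow> I \<subseteq> st I) \<and>
     (\<forall>I J. frac_ideal D I \<longrightarrow> frac_ideal D J \<longrightarrow> I \<subseteq> J \<longrightarrow> st I \<subseteq> st J) \<and>
     (\<forall>I. frac_ideal D I \<longrightarrow> st (st I) = st I)"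

definition finite_character :: "'k::field set \<Rightarrow> ('k set \<Rightarrow> 'k set) \<Rightarrow> bool" where
  "finite_character D st \<longleftrightarrow>
     (\<forall>I. frac_ideal D I \<longrightarrow>
        st I = \<Union>{st J | J. frac_ideal D J \<and> fin_gen D J \<and> J \<subseteq> I})"

definition star_ideal :: "'k::field set \<Rightarrow> ('k set \<Rightarrow> 'k set) \<Rightarrow> 'k set \<Rightarrow> bool" where
  "star_ideal D st I \<longleftrightarrow> frac_ideal D I \<and> st I = I"

definition star_fin_type :: "'k::field set \<Rightarrow> ('k set \<Rightarrow> 'k set) \<Rightarrow> 'k set \<Rightarrow> bool" where
  "star_fin_type D st I \<longleftrightarrow> star_ideal D st I \<and>
     (\<exists>J. frac_ideal D J \<and> fin_gen D J \<and> I = st J)"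

definition maximal_star_ideal :: "'k::field set \<Rightarrow> ('k set \<Rightarrow> 'k set) \<Rightarrow> 'k set \<Rightarrow> bool" where
  "maximal_star_ideal D st P \<longleftrightarrow> star_ideal D st P \<and> P \<subseteq> D \<and> P \<noteq> D \<and>
     (\<forall>Q. star_ideal D st Q \<and> Q \<subseteq> D \<and> Q \<noteq> D \<and> P \<subseteq> Q \<longrightarrow> Q = P)"

definition star_comax :: "'k::field set \<Rightarrow> ('k set \<Rightarrow> 'k set) \<Rightarrow> 'k set \<Rightarrow> 'k set \<Rightarrow> bool" where
  "star_comax D st A B \<longleftrightarrow> st (isum A B) = D"

definition star_homog :: "'k::field set \<Rightarrow> ('k set \<Rightarrow> 'k set) \<Rightarrow> 'k set \<Rightarrow> bool" where
  "star_homog D st I \<longleftrightarrow> star_fin_type D st I \<and> I \<subseteq> D \<and> I \<noteq> D \<and>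
     (\<forall>A B. star_fin_type D st A \<and> A \<subseteq> D \<and> A \<noteq> D \<and>
            star_fin_type D st B \<and> B \<subseteq> D \<and> B \<noteq> D \<and> I \<subseteq> A \<and> I \<subseteq> B
            \<longrightarrow> st (isum A B) \<noteq> D)"

definition principal :: "'k::field set \<Rightarrow> 'k set \<Rightarrow> bool" where
  "principal D J \<longleftrightarrow> (\<exists>x. x \<noteq> 0 \<and> J = smul x D)"

definition star_f_homog :: "'k::field set \<Rightarrow> ('k set \<Rightarrow> 'k set) \<Rightarrow> 'k set \<Rightarrow> bool" where
  "star_f_homog D st I \<longleftrightarrow> star_homog D st I \<and>
     (\<forall>J. star_fin_type D st J \<and> I \<subseteq> J \<longrightarrow> principal D J)"

definition star_f_homog_elem :: "'k::field set \<Rightarrow> ('k set \<Rightarrow> 'k set) \<Rightarrow> 'k \<Rightarrow> bool" where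
  "star_f_homog_elem D st x \<longleftrightarrow> x \<in> D \<and> star_f_homog D st (smul x D)"

definition localization :: "'k::field set \<Rightarrow> 'k set \<Rightarrow> 'k set" where
  "localization D P = {a / s | a s. a \<in> D \<and> s \<in> D \<and> s \<notin> P}"

definition valuation_dom :: "'k::field set \<Rightarrow> bool" where
  "valuation_dom V \<longleftrightarrow> (\<forall>x. x \<noteq> 0 \<longrightarrow> x \<in> V \<or> inverse x \<in> V)"

definition prime_ideal :: "'k::field set \<Rightarrow> 'k set \<Rightarrow> bool" where
  "prime_ideal D P \<longleftrightarrow> P \<subseteq> D \<and> dsubmodule D P \<and> P \<noteq> D \<and>
     (\<forall>a\<in>D. \<forall>b\<in>D. a * b \<in> P \<longrightarrow> a \<in> P \<or> b \<in> P)"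

definition star_IRKT :: "'k::field set \<Rightarrow> ('k set \<Rightarrow> 'k set) \<Rightarrow> bool" where
  "star_IRKT D st \<longleftrightarrow>
     (\<forall>P. maximal_star_ideal D st P \<longrightarrow> valuation_dom (localization D P)) \<and>
     D = \<Inter>{localization D P | P. maximal_star_ideal D st P} \<and>
     (\<forall>x\<in>D. x \<noteq> 0 \<longrightarrow> finite {P. maximal_star_ideal D st P \<and> x \<in> P}) \<and>
     (\<forall>P Q R. maximal_star_ideal D st P \<and> maximal_star_ideal D st Q \<and> P \<noteq> Q \<and>
        prime_ideal D R \<and> R \<noteq> {0} \<longrightarrow> \<not> (R \<subseteq> P \<and> R \<subseteq> Q))"

definition gcd_domain :: "'k::field set \<Rightarrow> bool" where
  "gcd_domain D \<longleftrightarrow> (\<forall>a\<in>D. \<forall>b\<in>D. \<exists>d\<in>D. ddvd D d a \<and> ddvd D d b \<and>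
      (\<forall>c\<in>D. ddvd D c a \<and> ddvd D c b \<longrightarrow> ddvd D c d))"

definition comax_fhomog_fact :: "'k::field set \<Rightarrow> ('k set \<Rightarrow> 'k set) \<Rightarrow> 'k \<Rightarrow> 'k list \<Rightarrow> bool" where
  "comax_fhomog_fact D st x xs \<longleftrightarrow>
     (\<forall>y\<in>set xs. star_f_homog_elem D st y) \<and>
     (\<forall>i<length xs. \<forall>j<length xs. i \<noteq> j \<longrightarrow>
        star_comax D st (smul (xs ! i) D) (smul (xs ! j) D)) \<and>
     prod_list xs = x"

definition star_prod_fhomog :: "'k::field set \<Rightarrow> ('k set \<Rightarrow> 'k set) \<Rightarrow> 'k \<Rightarrow> bool" where
  "star_prod_fhomog D st x \<longleftrightarrow>
     (\<exists>Is. (\<forall>I\<in>set Is. star_f_homog D st I) \<and> smul x D = st (iprod_list D Is))"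

end

theory Submission
  imports Defs
begin

(* A single *-f-homog ideal I already makes every *-ideal J of finite type principal: rescale J
   until it contains I and use the defining property of I.  Hence the hypothesis of the forward
   direction makes D *-Bezout, which gives the GCD property, valuation localizations at the
   maximal *-ideals and D as their intersection.  A *-homog principal ideal lies in exactly one
   maximal *-ideal; conversely, under *-Bezout, every element lying in exactly one maximal *-ideal
   is *-f-homog.  Merging the factors that share their maximal *-ideal gives the comaximal
   factorization, and a Euclid-lemma argument shows it is unique.

   For the converse, coprime elements of a GCD *-IRKT are *-comaximal (test the quotient in the
   valuation overrings D_P), so D is *-Bezout.  If x lies in several maximal *-ideals, the
   independence of the maximal *-ideals provides s outside one of them, P, but in x D_Q for all
   others Q; dividing x by gcd(x, s) splits off a factor lying in P only, and induction on the
   number of maximal *-ideals containing x finishes the factorization. *)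

lemma prod_list_update_mult:
  fixes xs :: "'a::comm_monoid_mult list"
  shows "k < length xs \<Longrightarrow> prod_list (xs[k := c * xs ! k]) = c * prod_list xs"
  by (induction xs arbitrary: k) (auto simp: ac_simps split: nat.split)

lemma prod_list_split_nth:
  fixes xs :: "'a::comm_monoid_mult list"
  assumes "i < length xs"
  shows "prod_list xs = xs ! i * prod_list (take i xs @ drop (Suc i) xs)"
  by (subst id_take_nth_drop[OF assms]) (simp add: ac_simps)

lemma map_update_eq_image:
  "k < length xs \<Longrightarrow> f v = f (xs ! k) \<Longrightarrow> map f (xs[k := v]) = map f xs"
  by (simp add: map_update list_update_same_conv)

lemma distinct_map_split_nth:
  assumes "distinct (map f xs)" "i < length xs" "z \<in> set (take i xs @ drop (Suc i) xs)"
  shows "f z \<noteq> f (xs ! i)"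
proof -
  have "distinct (map f (take i xs @ xs ! i # drop (Suc i) xs))"
    using assms(1) id_take_nth_drop[OF assms(2)] by metis
  hence "f (xs ! i) \<notin> f ` set (take i xs) \<union> f ` set (drop (Suc i) xs)" by simp
  thus ?thesis using assms(3) by (metis Un_iff image_eqI set_append)
qed

lemma distinct_map_reindex:
  assumes "distinct (map f xs)" "distinct (map f ys)" "set (map f xs) = set (map f ys)"
  obtains \<sigma> where "length ys = length xs" "bij_betw \<sigma> {..<length xs} {..<length xs}"
    "\<And>i. i < length xs \<Longrightarrow> \<sigma> i < length xs \<and> f (ys ! \<sigma> i) = f (xs ! i)"
proof -
  have len: "length ys = length xs" using distinct_card[OF assms(1)] distinct_card[OF assms(2)] assms(3) by simp
  define \<sigma> where "\<sigma> i = (THE j. j < length ys \<and> f (ys ! j) = f (xs ! i))" for i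
  have sig: "\<sigma> i < length xs \<and> f (ys ! \<sigma> i) = f (xs ! i)" if "i < length xs" for i
  proof -
    have "f (xs ! i) \<in> set (map f ys)" using that assms(3)[symmetric] by auto
    then obtain j where j: "j < length ys" "f (ys ! j) = f (xs ! i)" by (auto simp: in_set_conv_nth)
    have "\<And>j'. j' < length ys \<and> f (ys ! j') = f (xs ! i) \<Longrightarrow> j' = j"
      using assms(2) j unfolding distinct_conv_nth by (metis length_map nth_map)
    hence "\<sigma> i = j" unfolding \<sigma>_def using j by (intro the_equality) blast+
    thus ?thesis using j len by simp
  qed
  have "inj_on \<sigma> {..<length xs}"
    using sig assms(1) by (intro inj_onI) (metis lessThan_iff length_map nth_map distinct_conv_nth)
  moreover from this have "\<sigma> ` {..<length xs} = {..<length xs}"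
    using sig by (intro endo_inj_surj) auto
  ultimately show ?thesis using that len sig by (simp add: bij_betw_def)
qed

locale idom_in =
  fixes D :: "'k::field set"
  assumes domain: "domain_in D"
begin

lemma D_zero[simp]: "0 \<in> D" and D_one[simp]: "1 \<in> D"
  using domain by (auto simp: domain_in_def)

lemma D_add[intro]: "a \<in> D \<Longrightarrow> b \<in> D \<Longrightarrow> a + b \<in> D"
  and D_mult[intro]: "a \<in> D \<Longrightarrow> b \<in> D \<Longrightarrow> a * b \<in> D"
  using domain by (auto simp: domain_in_def)

lemma fraction_repr: "\<exists>a\<in>D. \<exists>b\<in>D. b \<noteq> 0 \<and> z = a / b"
  using domain by (auto simp: domain_in_def)

lemma D_power[intro]: "a \<in> D \<Longrightarrow> a ^ n \<in> D"
  by (induction n) auto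

lemma D_prod_list: "set xs \<subseteq> D \<Longrightarrow> prod_list xs \<in> D"
  by (induction xs) auto

lemma dsubmodule_zero: "dsubmodule D M \<Longrightarrow> 0 \<in> M"
  and dsubmodule_add: "dsubmodule D M \<Longrightarrow> a \<in> M \<Longrightarrow> b \<in> M \<Longrightarrow> a + b \<in> M"
  and dsubmodule_mult: "dsubmodule D M \<Longrightarrow> d \<in> D \<Longrightarrow> a \<in> M \<Longrightarrow> d * a \<in> M"
  by (simp_all add: dsubmodule_def)

lemma dsubmodule_mult_right: "dsubmodule D M \<Longrightarrow> d \<in> D \<Longrightarrow> a \<in> M \<Longrightarrow> a * d \<in> M"
  by (metis mult.commute dsubmodule_mult)

lemma dsubmodule_sum:
  assumes "dsubmodule D M" "finite F" "\<And>s. s \<in> F \<Longrightarrow> f s \<in> M"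
  shows "sum f F \<in> M"
  using assms(2,3) by (induction F rule: finite_induct) (use assms(1) in \<open>auto simp: dsubmodule_def\<close>)

lemma dsubmodule_D: "dsubmodule D D"
  by (auto simp: dsubmodule_def)

lemma dspanE:
  assumes "y \<in> dspan D S"
  obtains F c where "finite F" "F \<subseteq> S" "\<forall>s\<in>F. c s \<in> D" "y = (\<Sum>s\<in>F. c s * s)"
  using assms unfolding dspan_def mem_Collect_eq by (elim exE conjE) (rule that)

lemma dspanI:
  "finite F \<Longrightarrow> F \<subseteq> S \<Longrightarrow> \<forall>s\<in>F. c s \<in> D \<Longrightarrow> y = (\<Sum>s\<in>F. c s * s) \<Longrightarrow> y \<in> dspan D S"
  unfolding dspan_def mem_Collect_eq by (intro exI conjI)

lemma dspan_add:
  assumes "a \<in> dspan D S" "b \<in> dspan D S"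
  shows "a + b \<in> dspan D S"
proof -
  obtain F c where F: "finite F" "F \<subseteq> S" "\<forall>s\<in>F. c s \<in> D" "a = (\<Sum>s\<in>F. c s * s)"
    using assms(1) by (rule dspanE)
  obtain G e where G: "finite G" "G \<subseteq> S" "\<forall>s\<in>G. e s \<in> D" "b = (\<Sum>s\<in>G. e s * s)"
    using assms(2) by (rule dspanE)
  define c' where "c' s = (if s \<in> F then c s else 0)" for s
  define e' where "e' s = (if s \<in> G then e s else 0)" for s
  have a: "(\<Sum>s\<in>F \<union> G. c' s * s) = (\<Sum>s\<in>F. c s * s)"
    by (rule sum.mono_neutral_cong_right) (auto simp: c'_def F(1) G(1))
  have b: "(\<Sum>s\<in>F \<union> G. e' s * s) = (\<Sum>s\<in>G. e s * s)"
    by (rule sum.mono_neutral_cong_right) (auto simp: e'_def F(1) G(1))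
  have "a + b = (\<Sum>s\<in>F \<union> G. (c' s + e' s) * s)"
    by (simp only: F(4) G(4) a[symmetric] b[symmetric] sum.distrib distrib_right)
  moreover have "\<forall>s\<in>F \<union> G. c' s + e' s \<in> D"
    using F(3) G(3) by (auto simp: c'_def e'_def)
  ultimately show ?thesis
    using F(1,2) G(1,2) by (intro dspanI[of "F \<union> G" _ "\<lambda>s. c' s + e' s"]) auto
qed

lemma dspan_mult:
  assumes "d \<in> D" "a \<in> dspan D S"
  shows "d * a \<in> dspan D S"
proof -
  obtain F c where F: "finite F" "F \<subseteq> S" "\<forall>s\<in>F. c s \<in> D" "a = (\<Sum>s\<in>F. c s * s)"
    using assms(2) by (rule dspanE)
  have "d * a = (\<Sum>s\<in>F. (d * c s) * s)"
    unfolding F(4) by (simp add: sum_distrib_left mult.assoc)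
  thus ?thesis using F assms(1) by (intro dspanI[of F _ "\<lambda>s. d * c s"]) auto
qed

lemma dsubmodule_dspan: "dsubmodule D (dspan D S)"
  unfolding dsubmodule_def using dspanI[of "{}"] dspan_add dspan_mult by auto

lemma dspan_superset: "S \<subseteq> dspan D S"
  by (auto intro: dspanI[of "{s}" _ "\<lambda>_. 1" for s])

lemma dspan_least:
  assumes "dsubmodule D M" "S \<subseteq> M"
  shows "dspan D S \<subseteq> M"
proof
  fix y assume "y \<in> dspan D S"
  then obtain F c where F: "finite F" "F \<subseteq> S" "\<forall>s\<in>F. c s \<in> D" "y = (\<Sum>s\<in>F. c s * s)"
    by (rule dspanE)
  have "c s * s \<in> M" if "s \<in> F" for s
    using dsubmodule_mult[OF assms(1)] F(2,3) assms(2) that by blast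
  thus "y \<in> M" unfolding F(4) by (rule dsubmodule_sum[OF assms(1) F(1)])
qed

lemma dsubmodule_Union_chain:
  assumes "C \<noteq> {}" "subset.chain {M. dsubmodule D M} C"
  shows "dsubmodule D (\<Union>C)"
  unfolding dsubmodule_def
proof (intro conjI ballI)
  have sub: "\<And>M. M \<in> C \<Longrightarrow> dsubmodule D M" using assms(2) by (auto simp: subset.chain_def)
  show "0 \<in> \<Union>C" using assms(1) sub dsubmodule_zero by blast
  fix a b assume "a \<in> \<Union>C" "b \<in> \<Union>C"
  then obtain X Y where XY: "X \<in> C" "Y \<in> C" "a \<in> X" "b \<in> Y" by blast
  moreover have "X \<subseteq> Y \<or> Y \<subseteq> X" using assms(2) XY(1,2) by (auto simp: subset.chain_def)
  ultimately show "a + b \<in> \<Union>C" using sub[of X] sub[of Y] dsubmodule_add[of X a b] dsubmodule_add[of Y a b] by blast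
next
  fix d a assume "d \<in> D" "a \<in> \<Union>C"
  then obtain X where "X \<in> C" "a \<in> X" by blast
  moreover have "dsubmodule D X" using assms(2) calculation(1) by (auto simp: subset.chain_def)
  ultimately show "d * a \<in> \<Union>C" using dsubmodule_mult[of X d a] \<open>d \<in> D\<close> by blast
qed

lemma smul_mem: "a \<in> M \<Longrightarrow> x * a \<in> smul x M"
  unfolding smul_def by (rule imageI)

lemma mem_smul_D: "x \<in> smul x D"
  using smul_mem[of 1 D x] by simp

lemma smul_smul: "smul x (smul y M) = smul (x * y) M"
  unfolding smul_def image_image by (simp add: mult.assoc)

lemma smul_one[simp]: "smul 1 M = M"
  by (simp add: smul_def)

lemma smul_mono: "A \<subseteq> B \<Longrightarrow> smul x A \<subseteq> smul x B"
  by (auto simp: smul_def)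

lemma smul_inverse: "x \<noteq> 0 \<Longrightarrow> smul (inverse x) (smul x A) = A"
  unfolding smul_smul by simp

lemma smul_cancel: "x \<noteq> 0 \<Longrightarrow> smul x A = smul x B \<Longrightarrow> A = B"
  by (metis smul_inverse)

lemma dsubmodule_smul:
  assumes "dsubmodule D M"
  shows "dsubmodule D (smul x M)"
  unfolding dsubmodule_def
proof (intro conjI ballI)
  show "0 \<in> smul x M" using smul_mem[of 0 M x] dsubmodule_zero[OF assms] by simp
  fix a b assume "a \<in> smul x M" "b \<in> smul x M"
  then obtain a' b' where "a' \<in> M" "b' \<in> M" "a = x * a'" "b = x * b'" by (auto simp: smul_def)
  thus "a + b \<in> smul x M"
    using smul_mem[of "a' + b'" M x] dsubmodule_add[OF assms] by (simp add: distrib_left)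
next
  fix d a assume "d \<in> D" "a \<in> smul x M"
  then obtain a' where "a' \<in> M" "a = x * a'" by (auto simp: smul_def)
  thus "d * a \<in> smul x M"
    using smul_mem[of "d * a'" M x] dsubmodule_mult[OF assms \<open>d \<in> D\<close>] by (simp add: mult.left_commute)
qed

lemma smul_D_subset_iff:
  assumes "dsubmodule D M"
  shows "smul a D \<subseteq> M \<longleftrightarrow> a \<in> M"
  using mem_smul_D dsubmodule_mult_right[OF assms] by (auto simp: smul_def)

lemma dsubmodule_eq_D_if_one: "dsubmodule D J \<Longrightarrow> J \<subseteq> D \<Longrightarrow> 1 \<in> J \<Longrightarrow> J = D"
  using smul_D_subset_iff[of J 1] by auto

lemma frac_ideal_dsubmodule: "frac_ideal D I \<Longrightarrow> dsubmodule D I"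
  by (simp add: frac_ideal_def)

lemma frac_ideal_nonzeroE:
  assumes "frac_ideal D I"
  obtains w where "w \<in> I" "w \<noteq> 0"
  using assms by (auto simp: frac_ideal_def dsubmodule_def)

lemma frac_idealI: "dsubmodule D I \<Longrightarrow> I \<subseteq> D \<Longrightarrow> w \<in> I \<Longrightarrow> w \<noteq> 0 \<Longrightarrow> frac_ideal D I"
  unfolding frac_ideal_def by (intro conjI bexI[of _ 1]) auto

lemma frac_ideal_D: "frac_ideal D D"
  by (rule frac_idealI[OF dsubmodule_D _ D_one]) auto

lemma frac_ideal_smul:
  assumes "frac_ideal D I" "x \<noteq> 0"
  shows "frac_ideal D (smul x I)"
proof -
  obtain d where d: "d \<in> D" "d \<noteq> 0" "smul d I \<subseteq> D" using assms(1) by (auto simp: frac_ideal_def)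
  obtain p q where pq: "p \<in> D" "q \<in> D" "q \<noteq> 0" "x = p / q" using fraction_repr[of x] by blast
  obtain w where w: "w \<in> I" "w \<noteq> 0" using assms(1) by (rule frac_ideal_nonzeroE)
  have "smul (d * q) (smul x I) \<subseteq> D"
  proof
    fix y assume "y \<in> smul (d * q) (smul x I)"
    then obtain a where a: "a \<in> I" "y = d * q * (x * a)" by (auto simp: smul_def)
    have "y = p * (d * a)" using a pq by simp
    moreover have "d * a \<in> D" using d a smul_mem[of a I d] by blast
    ultimately show "y \<in> D" using pq by auto
  qed
  moreover have "x * w \<in> smul x I" "x * w \<noteq> 0" using w assms(2) smul_mem by auto
  ultimately show ?thesis
    unfolding frac_ideal_def using dsubmodule_smul[OF frac_ideal_dsubmodule[OF assms(1)]] d pq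
    by (intro conjI bexI[of _ "d * q"]) auto
qed

lemma frac_ideal_principal: "x \<noteq> 0 \<Longrightarrow> frac_ideal D (smul x D)"
  using frac_ideal_smul[OF frac_ideal_D] by blast

lemma frac_ideal_smul_D_nonzero: "frac_ideal D (smul y D) \<Longrightarrow> y \<noteq> 0"
  using D_zero by (auto simp: frac_ideal_def smul_def)

lemma frac_ideal_dspan: "S \<subseteq> D \<Longrightarrow> a \<in> S \<Longrightarrow> a \<noteq> 0 \<Longrightarrow> frac_ideal D (dspan D S)"
  by (rule frac_idealI[OF dsubmodule_dspan dspan_least[OF dsubmodule_D]])
    (auto intro: dspan_superset[THEN subsetD])

lemma dspan_singleton: "dspan D {a} = smul a D"
proof
  show "dspan D {a} \<subseteq> smul a D"
    by (rule dspan_least[OF dsubmodule_smul[OF dsubmodule_D]]) (simp add: mem_smul_D)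
  show "smul a D \<subseteq> dspan D {a}"
    using smul_D_subset_iff[OF dsubmodule_dspan] dspan_superset by blast
qed

lemma dspan_smul:
  assumes "x \<noteq> 0"
  shows "smul x (dspan D S) = dspan D ((\<lambda>y. x * y) ` S)"
proof
  have "dspan D S \<subseteq> smul (inverse x) (dspan D ((\<lambda>y. x * y) ` S))"
  proof (rule dspan_least[OF dsubmodule_smul[OF dsubmodule_dspan]], rule subsetI)
    fix s assume "s \<in> S"
    hence "inverse x * (x * s) \<in> smul (inverse x) (dspan D ((\<lambda>y. x * y) ` S))"
      using dspan_superset by (blast intro: smul_mem)
    thus "s \<in> smul (inverse x) (dspan D ((\<lambda>y. x * y) ` S))"
      using assms by (simp add: mult.assoc[symmetric])
  qed
  hence "smul x (dspan D S) \<subseteq> smul x (smul (inverse x) (dspan D ((\<lambda>y. x * y) ` S)))"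
    by (rule smul_mono)
  thus "smul x (dspan D S) \<subseteq> dspan D ((\<lambda>y. x * y) ` S)"
    using assms by (simp add: smul_smul)
  show "dspan D ((\<lambda>y. x * y) ` S) \<subseteq> smul x (dspan D S)"
    by (rule dspan_least[OF dsubmodule_smul[OF dsubmodule_dspan]])
      (auto intro!: smul_mem dspan_superset[THEN subsetD])
qed

lemma dsubmodule_isum:
  assumes "dsubmodule D A" "dsubmodule D B"
  shows "dsubmodule D (isum A B)"
  unfolding dsubmodule_def
proof (intro conjI ballI)
  show "0 \<in> isum A B"
    unfolding isum_def using dsubmodule_zero[OF assms(1)] dsubmodule_zero[OF assms(2)] by force
  fix a b assume "a \<in> isum A B" "b \<in> isum A B"
  then obtain a1 a2 b1 b2 where "a1 \<in> A" "a2 \<in> B" "b1 \<in> A" "b2 \<in> B" "a = a1 + a2" "b = b1 + b2"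
    unfolding isum_def by blast
  moreover have "a + b = (a1 + b1) + (a2 + b2)" using calculation by (simp add: algebra_simps)
  ultimately show "a + b \<in> isum A B"
    unfolding isum_def using dsubmodule_add[OF assms(1)] dsubmodule_add[OF assms(2)] by blast
next
  fix d a assume "d \<in> D" "a \<in> isum A B"
  then obtain a1 a2 where "a1 \<in> A" "a2 \<in> B" "a = a1 + a2" unfolding isum_def by blast
  moreover have "d * a = d * a1 + d * a2" using calculation by (simp add: algebra_simps)
  ultimately show "d * a \<in> isum A B"
    unfolding isum_def using dsubmodule_mult[OF assms(1) \<open>d \<in> D\<close>] dsubmodule_mult[OF assms(2) \<open>d \<in> D\<close>]
    by blast
qed

lemma isum_superset_left: "dsubmodule D B \<Longrightarrow> A \<subseteq> isum A B"
  unfolding isum_def using dsubmodule_zero by force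

lemma isum_superset_right: "dsubmodule D A \<Longrightarrow> B \<subseteq> isum A B"
  unfolding isum_def using dsubmodule_zero by force

lemma isum_least: "dsubmodule D M \<Longrightarrow> A \<subseteq> M \<Longrightarrow> B \<subseteq> M \<Longrightarrow> isum A B \<subseteq> M"
  unfolding isum_def using dsubmodule_add by blast

lemma isum_smul_D: "isum (smul a D) (smul b D) = dspan D {a, b}"
proof
  show "isum (smul a D) (smul b D) \<subseteq> dspan D {a, b}"
    by (rule isum_least[OF dsubmodule_dspan])
      (auto simp: smul_D_subset_iff[OF dsubmodule_dspan] intro: dspan_superset[THEN subsetD])
  have "{a, b} \<subseteq> isum (smul a D) (smul b D)"
    using isum_superset_left isum_superset_right mem_smul_D dsubmodule_smul[OF dsubmodule_D] by blast
  thus "dspan D {a, b} \<subseteq> isum (smul a D) (smul b D)"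
    by (rule dspan_least[OF dsubmodule_isum[OF dsubmodule_smul[OF dsubmodule_D] dsubmodule_smul[OF dsubmodule_D]]])
qed

lemma frac_ideal_isum:
  "frac_ideal D A \<Longrightarrow> frac_ideal D B \<Longrightarrow> A \<subseteq> D \<Longrightarrow> B \<subseteq> D \<Longrightarrow> frac_ideal D (isum A B)"
  by (metis frac_ideal_nonzeroE frac_idealI frac_ideal_dsubmodule isum_least isum_superset_left
      dsubmodule_isum dsubmodule_D subsetD)

lemma ddvd_iff_mem_smul_D: "ddvd D a b \<longleftrightarrow> b \<in> smul a D"
  by (auto simp: ddvd_def smul_def)

lemma ddvd_refl: "a \<in> D \<Longrightarrow> ddvd D a a"
  unfolding ddvd_def by (intro bexI[of _ 1]) auto

lemma ddvd_zero: "ddvd D a 0"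
  unfolding ddvd_def by (intro bexI[of _ 0]) auto

lemma ddvd_triv_left: "a \<in> D \<Longrightarrow> c \<in> D \<Longrightarrow> ddvd D a (a * c)"
  unfolding ddvd_def by blast

lemma ddvd_trans:
  assumes "ddvd D a b" "ddvd D b c"
  shows "ddvd D a c"
proof -
  obtain k where k: "k \<in> D" "b = a * k" using assms(1) by (auto simp: ddvd_def)
  obtain l where l: "l \<in> D" "c = b * l" using assms(2) by (auto simp: ddvd_def)
  have "c = a * (k * l)" using k l by (simp add: mult.assoc)
  thus ?thesis using k l unfolding ddvd_def by (intro bexI[of _ "k * l"]) auto
qed

lemma ddvd_mult_left: "ddvd D a b \<Longrightarrow> ddvd D (c * a) (c * b)"
  unfolding ddvd_def by (auto simp: mult.assoc)

lemma ddvd_mult_cancel_left: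
  assumes "s \<noteq> 0" "ddvd D (s * f) (s * a)"
  shows "ddvd D f a"
proof -
  obtain k where "k \<in> D" "s * a = s * f * k" using assms(2) by (auto simp: ddvd_def)
  hence "a = f * k" using assms(1) by (simp add: mult.assoc)
  thus ?thesis using \<open>k \<in> D\<close> by (auto simp: ddvd_def)
qed

lemma ddvd_prod_list: "set ys \<subseteq> D \<Longrightarrow> y \<in> set ys \<Longrightarrow> ddvd D y (prod_list ys)"
proof (induction ys)
  case (Cons a ys)
  show ?case
  proof (cases "y = a")
    case True thus ?thesis using Cons.prems D_prod_list[of ys] by (auto simp: ddvd_def)
  next
    case False
    then obtain k where "k \<in> D" "prod_list ys = y * k" using Cons by (auto simp: ddvd_def)
    thus ?thesis using Cons.prems unfolding ddvd_def by (intro bexI[of _ "a * k"]) (auto simp: ac_simps)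
  qed
qed simp

lemma dassoc_if_smul_D_eq:
  assumes "a \<noteq> 0" "b \<noteq> 0" "smul a D = smul b D"
  shows "dassoc D a b"
proof -
  obtain u where u: "u \<in> D" "b = a * u" using assms(3) mem_smul_D[of b] by (auto simp: smul_def)
  obtain v where v: "v \<in> D" "a = b * v" using assms(3) mem_smul_D[of a] by (auto simp: smul_def)
  have "u * v = 1" using u v assms(1) by (simp add: mult.assoc) (metis mult_cancel_left1 mult.assoc)
  hence "inverse u = v" by (metis inverse_unique)
  thus ?thesis
    unfolding dassoc_def dunit_def using u v \<open>u * v = 1\<close> by (intro exI[of _ u]) (auto simp: mult.commute)
qed

lemma dassoc_if_ddvd:
  assumes "a \<noteq> 0" "b \<noteq> 0" "ddvd D a b" "ddvd D b a"
  shows "dassoc D a b"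
proof -
  have "smul b D \<subseteq> smul a D" "smul a D \<subseteq> smul b D"
    using assms(3,4) smul_D_subset_iff[OF dsubmodule_smul[OF dsubmodule_D]] by (auto simp: ddvd_iff_mem_smul_D)
  thus ?thesis using dassoc_if_smul_D_eq[OF assms(1,2)] by blast
qed

lemma dunit_iff_smul_D:
  assumes "a \<in> D" "a \<noteq> 0"
  shows "dunit D a \<longleftrightarrow> smul a D = D"
proof
  assume "dunit D a"
  hence "a * inverse a \<in> smul a D" by (intro smul_mem) (simp add: dunit_def)
  hence "1 \<in> smul a D" using assms(2) by simp
  moreover have "smul a D \<subseteq> D" using smul_D_subset_iff[OF dsubmodule_D] assms(1) by simp
  ultimately show "smul a D = D" using dsubmodule_eq_D_if_one[OF dsubmodule_smul[OF dsubmodule_D]] by blast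
next
  assume "smul a D = D"
  then obtain u where "u \<in> D" "1 = a * u" using D_one unfolding smul_def by (metis imageE)
  hence "inverse a = u" by (metis inverse_unique)
  thus "dunit D a" using assms \<open>u \<in> D\<close> by (simp add: dunit_def)
qed

definition dcoprime :: "'k \<Rightarrow> 'k \<Rightarrow> bool" where
  "dcoprime a b \<longleftrightarrow> (\<forall>c\<in>D. ddvd D c a \<and> ddvd D c b \<longrightarrow> ddvd D c 1)"

lemma dcoprime_commute: "dcoprime a b \<Longrightarrow> dcoprime b a"
  by (auto simp: dcoprime_def)

lemma dcoprime_ddvd_mult:
  assumes "gcd_domain D" and D: "a \<in> D" "b \<in> D" "s \<in> D"
    and "dcoprime a b" "ddvd D b (a * s)"
  shows "ddvd D b s"
proof (cases "s = 0")
  case True thus ?thesis by (simp add: ddvd_zero)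
next
  case False
  obtain e where e: "e \<in> D" "ddvd D e (a * s)" "ddvd D e (b * s)"
    "\<forall>c\<in>D. ddvd D c (a * s) \<and> ddvd D c (b * s) \<longrightarrow> ddvd D c e"
    using assms(1) D_mult[OF D(1,3)] D_mult[OF D(2,3)] unfolding gcd_domain_def by blast
  have be: "ddvd D b e" using e(4) assms(6) ddvd_triv_left[OF D(2,3)] D by blast
  have "ddvd D s (a * s)" "ddvd D s (b * s)"
    using ddvd_triv_left[OF D(3) D(1)] ddvd_triv_left[OF D(3) D(2)] by (simp_all add: mult.commute)
  hence "ddvd D s e" using e(4) D by blast
  then obtain f where f: "f \<in> D" "e = s * f" by (auto simp: ddvd_def)
  have "ddvd D f a" "ddvd D f b"
    using ddvd_mult_cancel_left[OF False] e(2,3) f(2) by (simp_all add: mult.commute)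
  hence "ddvd D f 1" using assms(5) f(1) by (auto simp: dcoprime_def)
  hence "ddvd D e s" using ddvd_mult_left[of f 1 s] f(2) by (simp add: mult.commute)
  thus ?thesis using ddvd_trans be by blast
qed

lemma gcd_decomp:
  assumes "gcd_domain D" "a \<in> D" "b \<in> D" "b \<noteq> 0"
  obtains d a' b' where "d \<in> D" "d \<noteq> 0" "a' \<in> D" "b' \<in> D" "a = d * a'" "b = d * b'" "dcoprime a' b'"
proof -
  obtain d where d: "d \<in> D" "ddvd D d a" "ddvd D d b" "\<forall>c\<in>D. ddvd D c a \<and> ddvd D c b \<longrightarrow> ddvd D c d"
    using assms unfolding gcd_domain_def by blast
  obtain a' b' where ab: "a' \<in> D" "b' \<in> D" "a = d * a'" "b = d * b'" using d(2,3) by (auto simp: ddvd_def)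
  have d0: "d \<noteq> 0" using ab(4) assms(4) by auto
  have "dcoprime a' b'" unfolding dcoprime_def
  proof (intro ballI impI)
    fix c assume c: "c \<in> D" "ddvd D c a' \<and> ddvd D c b'"
    have "ddvd D (d * c) a" "ddvd D (d * c) b" using ddvd_mult_left c ab by auto
    hence "ddvd D (d * c) (d * 1)" using d(4) c(1) d(1) by auto
    thus "ddvd D c 1" using ddvd_mult_cancel_left[OF d0] by blast
  qed
  thus ?thesis using that d(1) d0 ab by blast
qed

end


locale star_domain = idom_in D for D :: "'k::field set" +
  fixes st :: "'k::field set \<Rightarrow> 'k set"
  assumes star_op: "star_op D st" and fin_char: "finite_character D st"
begin

lemma st_frac: "frac_ideal D I \<Longrightarrow> frac_ideal D (st I)"
  and st_ext: "frac_ideal D I \<Longrightarrow> I \<subseteq> st I"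
  and st_idem: "frac_ideal D I \<Longrightarrow> st (st I) = st I"
  and st_mono: "frac_ideal D I \<Longrightarrow> frac_ideal D J \<Longrightarrow> I \<subseteq> J \<Longrightarrow> st I \<subseteq> st J"
  and st_principal: "x \<noteq> 0 \<Longrightarrow> st (smul x D) = smul x D"
  and st_smul: "x \<noteq> 0 \<Longrightarrow> frac_ideal D I \<Longrightarrow> st (smul x I) = smul x (st I)"
  using star_op by (simp_all add: star_op_def)

lemma st_subset_D: "frac_ideal D I \<Longrightarrow> I \<subseteq> D \<Longrightarrow> st I \<subseteq> D"
  using st_mono[OF _ frac_ideal_D, of I] st_principal[of 1] by simp

lemma dsubmodule_st: "frac_ideal D I \<Longrightarrow> dsubmodule D (st I)"
  using st_frac frac_ideal_dsubmodule by blast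

lemma star_ideal_st: "frac_ideal D I \<Longrightarrow> star_ideal D st (st I)"
  by (simp add: star_ideal_def st_frac st_idem)

lemma star_ideal_principal: "x \<noteq> 0 \<Longrightarrow> star_ideal D st (smul x D)"
  by (simp add: star_ideal_def st_principal frac_ideal_principal)

lemma star_ideal_eq_D_if_one: "star_ideal D st J \<Longrightarrow> J \<subseteq> D \<Longrightarrow> 1 \<in> J \<Longrightarrow> J = D"
  using dsubmodule_eq_D_if_one frac_ideal_dsubmodule by (auto simp: star_ideal_def)

text \<open>\<open>nz_subset S\<close> is what makes \<open>dspan D S\<close> a nonzero fractional ideal, on which \<open>st\<close> is
  specified.\<close>

abbreviation star_span :: "'k set \<Rightarrow> 'k set" where
  "star_span S \<equiv> st (dspan D S)"

definition nz_subset :: "'k set \<Rightarrow> bool" where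
  "nz_subset S \<longleftrightarrow> S \<subseteq> D \<and> (\<exists>a\<in>S. a \<noteq> 0)"

lemma nz_subsetI: "S \<subseteq> D \<Longrightarrow> a \<in> S \<Longrightarrow> a \<noteq> 0 \<Longrightarrow> nz_subset S"
  unfolding nz_subset_def by blast

lemma nz_subset_pair: "a \<in> D \<Longrightarrow> b \<in> D \<Longrightarrow> b \<noteq> 0 \<Longrightarrow> nz_subset {a, b}"
  by (rule nz_subsetI[of _ b]) auto

lemma frac_ideal_dspan_nz_subset: "nz_subset S \<Longrightarrow> frac_ideal D (dspan D S)"
  unfolding nz_subset_def using frac_ideal_dspan by blast

lemma frac_ideal_star_span: "nz_subset S \<Longrightarrow> frac_ideal D (star_span S)"
  by (rule st_frac[OF frac_ideal_dspan_nz_subset])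

lemma star_span_subset_D:
  assumes "nz_subset S"
  shows "star_span S \<subseteq> D"
  using st_subset_D[OF frac_ideal_dspan_nz_subset[OF assms] dspan_least[OF dsubmodule_D]] assms
  by (simp add: nz_subset_def)

lemma star_span_superset: "nz_subset S \<Longrightarrow> S \<subseteq> star_span S"
  by (rule order_trans[OF dspan_superset st_ext[OF frac_ideal_dspan_nz_subset]])

lemma star_ideal_star_span: "nz_subset S \<Longrightarrow> star_ideal D st (star_span S)"
  by (rule star_ideal_st[OF frac_ideal_dspan_nz_subset])

lemma star_span_least:
  assumes "nz_subset S" "star_ideal D st J" "S \<subseteq> J"
  shows "star_span S \<subseteq> J"
proof -
  have "dspan D S \<subseteq> J" using assms(2,3) dspan_least frac_ideal_dsubmodule by (auto simp: star_ideal_def)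
  moreover have "frac_ideal D J" "st J = J" using assms(2) by (simp_all add: star_ideal_def)
  ultimately show ?thesis using st_mono[OF frac_ideal_dspan_nz_subset[OF assms(1)], of J] by simp
qed

lemma star_span_mono: "nz_subset S \<Longrightarrow> nz_subset S' \<Longrightarrow> S \<subseteq> star_span S' \<Longrightarrow> star_span S \<subseteq> star_span S'"
  using star_span_least star_ideal_star_span by blast

lemma star_fin_type_star_span:
  assumes "nz_subset S" "finite S"
  shows "star_fin_type D st (star_span S)"
  unfolding star_fin_type_def fin_gen_def
  using star_ideal_star_span[OF assms(1)] frac_ideal_dspan_nz_subset[OF assms(1)] assms(2) by blast

lemma star_span_singleton: "a \<noteq> 0 \<Longrightarrow> star_span {a} = smul a D"
  by (simp add: dspan_singleton st_principal)

lemma smul_star_span: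
  assumes "x \<noteq> 0" "nz_subset S"
  shows "smul x (star_span S) = star_span ((\<lambda>y. x * y) ` S)"
  using st_smul[OF assms(1) frac_ideal_dspan_nz_subset[OF assms(2)]] dspan_smul[OF assms(1)] by simp

lemma max_star_ideal: "maximal_star_ideal D st P \<Longrightarrow> star_ideal D st P"
  and max_subset_D: "maximal_star_ideal D st P \<Longrightarrow> P \<subseteq> D"
  and max_maximal: "maximal_star_ideal D st P \<Longrightarrow> star_ideal D st Q \<Longrightarrow> Q \<subseteq> D \<Longrightarrow> Q \<noteq> D \<Longrightarrow>
    P \<subseteq> Q \<Longrightarrow> Q = P"
  by (simp_all add: maximal_star_ideal_def)

lemma max_frac_ideal: "maximal_star_ideal D st P \<Longrightarrow> frac_ideal D P"
  and max_st_eq: "maximal_star_ideal D st P \<Longrightarrow> st P = P"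
  by (simp_all add: maximal_star_ideal_def star_ideal_def)

lemma max_dsubmodule: "maximal_star_ideal D st P \<Longrightarrow> dsubmodule D P"
  by (simp add: max_frac_ideal frac_ideal_dsubmodule)

lemma one_notin_max: "maximal_star_ideal D st P \<Longrightarrow> 1 \<notin> P"
  using star_ideal_eq_D_if_one by (auto simp: maximal_star_ideal_def)

lemma nonzero_if_notin_max: "maximal_star_ideal D st P \<Longrightarrow> t \<notin> P \<Longrightarrow> t \<noteq> 0"
  using dsubmodule_zero[OF max_dsubmodule] by blast

lemma max_mult: "maximal_star_ideal D st P \<Longrightarrow> a \<in> P \<Longrightarrow> d \<in> D \<Longrightarrow> a * d \<in> P"
  using dsubmodule_mult_right max_dsubmodule by blast

lemma dunit_notin_max:
  assumes "maximal_star_ideal D st P" "dunit D u"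
  shows "u \<notin> P"
  using max_mult[OF assms(1), of u "inverse u"] assms one_notin_max by (auto simp: dunit_def)

lemma star_coprime_not_both_in_max:
  assumes "star_span {a, b} = D" "nz_subset {a, b}" "maximal_star_ideal D st P" "a \<in> P" "b \<in> P"
  shows False
  using star_span_least[OF assms(2) max_star_ideal[OF assms(3)]] assms(1,4,5) one_notin_max[OF assms(3)]
  by auto

lemma st_isum_max_eq_D:
  assumes "maximal_star_ideal D st P" "a \<in> D" "a \<notin> P"
  shows "st (isum P (smul a D)) = D"
proof -
  let ?I = "isum P (smul a D)"
  have aD: "smul a D \<subseteq> D" using smul_D_subset_iff[OF dsubmodule_D] assms(2) by simp
  have fr: "frac_ideal D ?I"
    using frac_ideal_isum[OF max_frac_ideal[OF assms(1)] frac_ideal_principal max_subset_D[OF assms(1)] aD]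
      nonzero_if_notin_max[OF assms(1,3)] by blast
  have "P \<subseteq> st ?I" "a \<in> st ?I"
    using isum_superset_left[OF dsubmodule_smul[OF dsubmodule_D]] isum_superset_right[OF max_dsubmodule[OF assms(1)]]
      st_ext[OF fr] mem_smul_D by blast+
  moreover have "st ?I \<subseteq> D"
    using st_subset_D[OF fr isum_least[OF dsubmodule_D max_subset_D[OF assms(1)] aD]] .
  ultimately show ?thesis
    using max_maximal[OF assms(1) star_ideal_st[OF fr]] assms(3) by blast
qed

lemma max_prime:
  assumes "maximal_star_ideal D st P" "a \<in> D" "b \<in> D" "a * b \<in> P"
  shows "a \<in> P \<or> b \<in> P"
proof (rule ccontr)
  assume "\<not> (a \<in> P \<or> b \<in> P)"
  hence na: "a \<notin> P" and nb: "b \<notin> P" by auto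
  note b0 = nonzero_if_notin_max[OF assms(1) nb]
  have aD: "smul a D \<subseteq> D" using smul_D_subset_iff[OF dsubmodule_D] assms(2) by simp
  have fr: "frac_ideal D (isum P (smul a D))"
    using frac_ideal_isum[OF max_frac_ideal[OF assms(1)] frac_ideal_principal max_subset_D[OF assms(1)] aD]
      nonzero_if_notin_max[OF assms(1) na] by blast
  have "smul b (isum P (smul a D)) \<subseteq> P"
  proof
    fix y assume "y \<in> smul b (isum P (smul a D))"
    then obtain p d where "p \<in> P" "d \<in> D" "y = b * (p + a * d)"
      by (auto simp: smul_def isum_def)
    moreover have "b * (p + a * d) = b * p + (a * b) * d" by (simp add: algebra_simps)
    ultimately show "y \<in> P"
      using dsubmodule_add[OF max_dsubmodule[OF assms(1)]] dsubmodule_mult[OF max_dsubmodule[OF assms(1)] assms(3)]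
        max_mult[OF assms(1) assms(4)] by auto
  qed
  hence "st (smul b (isum P (smul a D))) \<subseteq> st P"
    using st_mono frac_ideal_smul[OF fr b0] max_frac_ideal[OF assms(1)] by blast
  hence "smul b D \<subseteq> P"
    using st_smul[OF b0 fr] st_isum_max_eq_D[OF assms(1,2) na] max_st_eq[OF assms(1)] by simp
  thus False using nb mem_smul_D by blast
qed

lemma max_prod_list:
  assumes "maximal_star_ideal D st P" "set xs \<subseteq> D" "prod_list xs \<in> P"
  shows "\<exists>x\<in>set xs. x \<in> P"
  using assms(2,3)
proof (induction xs)
  case Nil thus ?case using one_notin_max[OF assms(1)] by simp
next
  case (Cons a xs)
  thus ?case using max_prime[OF assms(1), of a "prod_list xs"] D_prod_list by auto
qed

lemma max_power:
  assumes "maximal_star_ideal D st P" "r \<in> D" "r ^ m \<in> P"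
  shows "r \<in> P"
  using assms(3)
proof (induction m)
  case 0 thus ?case using one_notin_max[OF assms(1)] by simp
next
  case (Suc m)
  thus ?case using max_prime[OF assms(1) assms(2) D_power[OF assms(2), of m]] by auto
qed

text \<open>Finite character is what makes unions of chains of *-ideals *-ideals again.\<close>

lemma st_Union_chain:
  assumes "C \<noteq> {}" "subset.chain {Q. star_ideal D st Q} C" "frac_ideal D (\<Union>C)"
  shows "st (\<Union>C) = \<Union>C"
proof -
  have cmp: "\<And>X Y. X \<in> C \<Longrightarrow> Y \<in> C \<Longrightarrow> X \<subseteq> Y \<or> Y \<subseteq> X"
    and Cst: "\<And>Q. Q \<in> C \<Longrightarrow> star_ideal D st Q"
    using assms(2) by (auto simp: subset.chain_def)
  have "st (\<Union>C) \<subseteq> \<Union>C"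
  proof
    fix z assume "z \<in> st (\<Union>C)"
    then obtain J where J: "frac_ideal D J" "fin_gen D J" "J \<subseteq> \<Union>C" "z \<in> st J"
      using fin_char assms(3) unfolding finite_character_def by blast
    obtain F where F: "finite F" "J = dspan D F" using J(2) by (auto simp: fin_gen_def)
    have "F \<subseteq> \<Union>C" using J(3) F(2) dspan_superset by blast
    then obtain Q where Q: "Q \<in> C" "F \<subseteq> Q"
      using finite_subset_Union_chain[OF F(1) _ assms(1,2)] by blast
    have "frac_ideal D Q" "st Q = Q" using Cst[OF Q(1)] by (simp_all add: star_ideal_def)
    moreover have "J \<subseteq> Q" using F(2) dspan_least[OF frac_ideal_dsubmodule Q(2)] calculation(1) by simp
    ultimately show "z \<in> \<Union>C" using st_mono[OF J(1), of Q] J(4) Q(1) by auto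
  qed
  thus ?thesis using st_ext[OF assms(3)] by blast
qed

lemma star_ideal_in_max:
  assumes "star_ideal D st I" "I \<subseteq> D" "I \<noteq> D"
  shows "\<exists>P. maximal_star_ideal D st P \<and> I \<subseteq> P"
proof -
  define A where "A = {Q. star_ideal D st Q \<and> Q \<subseteq> D \<and> Q \<noteq> D \<and> I \<subseteq> Q}"
  have chain: "\<Union>C \<in> A" if C: "C \<noteq> {}" "subset.chain A C" for C
  proof -
    have Qs: "star_ideal D st Q" "Q \<subseteq> D" "1 \<notin> Q" "I \<subseteq> Q" if "Q \<in> C" for Q
      using C(2) that star_ideal_eq_D_if_one by (auto simp: A_def subset.chain_def)
    obtain Q0 where Q0: "Q0 \<in> C" using C(1) by blast
    have "subset.chain {M. dsubmodule D M} C"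
      using C(2) Qs(1) frac_ideal_dsubmodule by (auto simp: subset.chain_def star_ideal_def)
    hence sub: "dsubmodule D (\<Union>C)" by (rule dsubmodule_Union_chain[OF C(1)])
    obtain w where "w \<in> I" "w \<noteq> 0" using assms(1) frac_ideal_nonzeroE by (auto simp: star_ideal_def)
    hence fr: "frac_ideal D (\<Union>C)" using frac_idealI[OF sub] Qs(2,4) Q0 by blast
    have "subset.chain {Q. star_ideal D st Q} C"
      using C(2) by (auto simp: subset.chain_def A_def)
    hence "star_ideal D st (\<Union>C)" using st_Union_chain[OF C(1) _ fr] fr by (simp add: star_ideal_def)
    moreover have "\<Union>C \<subseteq> D" "1 \<notin> \<Union>C" "I \<subseteq> \<Union>C" using Qs(2,3,4) Q0 by blast+
    ultimately show ?thesis unfolding A_def by auto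
  qed
  have "I \<in> A" using assms by (simp add: A_def)
  then obtain M where M: "M \<in> A" "\<forall>X\<in>A. M \<subseteq> X \<longrightarrow> X = M"
    using subset_Zorn_nonempty[of A] chain by blast
  have "maximal_star_ideal D st M"
    unfolding maximal_star_ideal_def
  proof (intro conjI allI impI)
    show "star_ideal D st M" "M \<subseteq> D" "M \<noteq> D" using M(1) by (auto simp: A_def)
    fix Q assume Q: "star_ideal D st Q \<and> Q \<subseteq> D \<and> Q \<noteq> D \<and> M \<subseteq> Q"
    moreover have "I \<subseteq> M" using M(1) by (simp add: A_def)
    ultimately have "Q \<in> A" by (auto simp: A_def)
    thus "Q = M" using M(2) Q by blast
  qed
  thus ?thesis using M(1) by (auto simp: A_def)
qed

lemma nonunit_in_max:
  assumes "a \<in> D" "a \<noteq> 0" "\<not> dunit D a"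
  shows "\<exists>P. maximal_star_ideal D st P \<and> a \<in> P"
proof -
  have "smul a D \<noteq> D" "smul a D \<subseteq> D"
    using dunit_iff_smul_D assms smul_D_subset_iff[OF dsubmodule_D] by auto
  then obtain P where "maximal_star_ideal D st P" "smul a D \<subseteq> P"
    using star_ideal_in_max star_ideal_principal[OF assms(2)] by blast
  thus ?thesis using mem_smul_D by blast
qed

lemma star_comax_if_no_common_max:
  assumes "a \<in> D" "b \<in> D" "b \<noteq> 0" "\<not> (\<exists>P. maximal_star_ideal D st P \<and> a \<in> P \<and> b \<in> P)"
  shows "star_span {a, b} = D"
proof (rule ccontr)
  assume ne: "star_span {a, b} \<noteq> D"
  note nz = nz_subset_pair[OF assms(1-3)]
  obtain P where "maximal_star_ideal D st P" "star_span {a, b} \<subseteq> P"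
    using star_ideal_in_max[OF star_ideal_star_span[OF nz] star_span_subset_D[OF nz] ne] by blast
  thus False using star_span_superset[OF nz] assms(4) by blast
qed

definition star_bezout :: bool where
  "star_bezout \<longleftrightarrow> (\<forall>J. star_fin_type D st J \<longrightarrow> principal D J)"

lemma star_f_homog_principalE:
  assumes "star_f_homog D st I"
  obtains y where "y \<in> D" "y \<noteq> 0" "I = smul y D"
proof -
  have "star_fin_type D st I" "I \<subseteq> D" using assms by (auto simp: star_f_homog_def star_homog_def)
  moreover from this have "principal D I" using assms by (auto simp: star_f_homog_def)
  ultimately show ?thesis using that mem_smul_D by (auto simp: principal_def)
qed

text \<open>Rescaling a *-ideal \<open>J\<close> of finite type by \<open>y / w\<close>, with \<open>w \<in> J\<close> and \<open>I = y D\<close>,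
  produces one that contains \<open>I\<close>, hence is principal by the defining property of \<open>I\<close>.\<close>

lemma star_bezout_if_f_homog:
  assumes "star_f_homog D st I"
  shows star_bezout
  unfolding star_bezout_def
proof (intro allI impI)
  fix J assume J: "star_fin_type D st J"
  obtain y where y: "y \<in> D" "y \<noteq> 0" "I = smul y D" using assms by (rule star_f_homog_principalE)
  have fJ: "frac_ideal D J" and sJ: "st J = J" using J by (auto simp: star_fin_type_def star_ideal_def)
  obtain J0 where J0: "frac_ideal D J0" "fin_gen D J0" "J = st J0" using J by (auto simp: star_fin_type_def)
  obtain F where F: "finite F" "J0 = dspan D F" using J0(2) by (auto simp: fin_gen_def)
  obtain w where w: "w \<in> J" "w \<noteq> 0" using fJ by (rule frac_ideal_nonzeroE)
  define c where "c = y / w"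
  have c0: "c \<noteq> 0" using y w by (simp add: c_def)
  have "smul c J0 = dspan D ((\<lambda>z. c * z) ` F)" using dspan_smul[OF c0] F(2) by simp
  hence "fin_gen D (smul c J0)" using F(1) by (auto simp: fin_gen_def)
  hence "star_fin_type D st (smul c J)"
    unfolding star_fin_type_def star_ideal_def
    using frac_ideal_smul[OF fJ c0] st_smul[OF c0 fJ] sJ st_smul[OF c0 J0(1)] J0(3) frac_ideal_smul[OF J0(1) c0]
    by auto
  moreover have "y \<in> smul c J" using smul_mem[OF w(1), of c] w by (simp add: c_def)
  hence "I \<subseteq> smul c J" using y(3) smul_D_subset_iff[OF frac_ideal_dsubmodule[OF frac_ideal_smul[OF fJ c0]]] by simp
  ultimately have "principal D (smul c J)" using assms by (auto simp: star_f_homog_def)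
  then obtain z where z: "z \<noteq> 0" "smul c J = smul z D" by (auto simp: principal_def)
  have "J = smul (inverse c * z) D" using smul_inverse[OF c0, of J] z(2) by (simp add: smul_smul)
  thus "principal D J" unfolding principal_def using z c0 by (intro exI[of _ "inverse c * z"]) auto
qed

lemma star_bezout_if_all_units:
  assumes "\<forall>x\<in>D. x \<noteq> 0 \<longrightarrow> dunit D x"
  shows star_bezout
  unfolding star_bezout_def
proof (intro allI impI)
  fix J assume "star_fin_type D st J"
  hence fJ: "frac_ideal D J" by (simp add: star_fin_type_def star_ideal_def)
  have UNIV: "z \<in> D" for z
  proof -
    obtain a b where ab: "a \<in> D" "b \<in> D" "b \<noteq> 0" "z = a / b" using fraction_repr[of z] by blast
    hence "a * inverse b \<in> D" using assms by (auto simp: dunit_def)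
    thus ?thesis using ab(4) by (simp add: divide_inverse)
  qed
  obtain w where w: "w \<in> J" "w \<noteq> 0" using fJ by (rule frac_ideal_nonzeroE)
  have "z \<in> J" for z
    using dsubmodule_mult[OF frac_ideal_dsubmodule[OF fJ] UNIV[of "z / w"] w(1)] w(2) by simp
  hence "J = smul 1 D" using UNIV by auto
  thus "principal D J" unfolding principal_def by (intro exI[of _ 1]) simp
qed

context
  assumes bezout: star_bezout
begin

lemma star_span_principalE:
  assumes "nz_subset S" "finite S"
  obtains d where "d \<in> D" "d \<noteq> 0" "star_span S = smul d D"
proof -
  have "principal D (star_span S)" using bezout star_fin_type_star_span[OF assms] unfolding star_bezout_def by blast
  then obtain d where d: "d \<noteq> 0" "star_span S = smul d D" by (auto simp: principal_def)
  hence "d \<in> D" using star_span_subset_D[OF assms(1)] mem_smul_D by blast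
  thus ?thesis using that d by blast
qed

lemma star_coprime_decomp:
  assumes "a \<in> D" "b \<in> D" "b \<noteq> 0"
  obtains d a' b' where "d \<in> D" "d \<noteq> 0" "a' \<in> D" "b' \<in> D" "a = d * a'" "b = d * b'" "b' \<noteq> 0"
    "star_span {a', b'} = D"
proof -
  note nz = nz_subset_pair[OF assms]
  obtain d where d: "d \<in> D" "d \<noteq> 0" "star_span {a, b} = smul d D"
    using star_span_principalE[OF nz] by blast
  have "a \<in> smul d D" "b \<in> smul d D" using star_span_superset[OF nz] d(3) by auto
  then obtain a' b' where ab: "a' \<in> D" "b' \<in> D" "a = d * a'" "b = d * b'" by (auto simp: smul_def)
  have b0: "b' \<noteq> 0" using ab assms(3) by auto
  have "smul d (star_span {a', b'}) = smul d D"
    using smul_star_span[OF d(2) nz_subset_pair[OF ab(1,2) b0]] ab d(3) by simp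
  hence "star_span {a', b'} = D" using d(2) smul_cancel by blast
  thus ?thesis using that d ab b0 by blast
qed

lemma valuation_dom_localization:
  assumes "maximal_star_ideal D st P"
  shows "valuation_dom (localization D P)"
  unfolding valuation_dom_def
proof (intro allI impI)
  fix x :: 'k
  obtain a b where ab: "a \<in> D" "b \<in> D" "b \<noteq> 0" "x = a / b" using fraction_repr[of x] by blast
  obtain d a' b' where r: "d \<in> D" "d \<noteq> 0" "a' \<in> D" "b' \<in> D" "a = d * a'" "b = d * b'" "b' \<noteq> 0"
    "star_span {a', b'} = D" using star_coprime_decomp[OF ab(1-3)] by blast
  have "x = a' / b'" "inverse x = b' / a'" using ab r by simp_all
  moreover have "a' \<notin> P \<or> b' \<notin> P"
    using star_coprime_not_both_in_max[OF r(8) nz_subset_pair[OF r(3,4,7)] assms] by blast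
  ultimately show "x \<in> localization D P \<or> inverse x \<in> localization D P"
    using r(3,4) by (auto simp: localization_def)
qed

lemma gcd_domain_if_star_bezout: "gcd_domain D"
  unfolding gcd_domain_def
proof (intro ballI)
  fix a b assume ab: "a \<in> D" "b \<in> D"
  show "\<exists>d\<in>D. ddvd D d a \<and> ddvd D d b \<and> (\<forall>c\<in>D. ddvd D c a \<and> ddvd D c b \<longrightarrow> ddvd D c d)"
  proof (cases "b = 0")
    case True
    thus ?thesis using ab ddvd_refl ddvd_zero by blast
  next
    case False
    note nz = nz_subset_pair[OF ab False]
    obtain d where d: "d \<in> D" "d \<noteq> 0" "star_span {a, b} = smul d D"
      using star_span_principalE[OF nz] by blast
    have "a \<in> smul d D" "b \<in> smul d D" using star_span_superset[OF nz] d(3) by auto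
    moreover have "ddvd D c d" if c: "c \<in> D" "ddvd D c a" "ddvd D c b" for c
    proof -
      have c0: "c \<noteq> 0" using c(3) False by (auto simp: ddvd_def)
      have "{a, b} \<subseteq> smul c D" using c by (auto simp: ddvd_iff_mem_smul_D)
      hence "star_span {a, b} \<subseteq> smul c D" using star_span_least[OF nz star_ideal_principal[OF c0]] by simp
      thus ?thesis using d(3) mem_smul_D by (auto simp: ddvd_iff_mem_smul_D)
    qed
    ultimately show ?thesis using d(1) by (auto simp: ddvd_iff_mem_smul_D)
  qed
qed

lemma Inter_localizations: "D = \<Inter>{localization D P | P. maximal_star_ideal D st P}"
proof
  show "D \<subseteq> \<Inter>{localization D P | P. maximal_star_ideal D st P}"
    using one_notin_max by (fastforce simp: localization_def intro: exI[of _ 1])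
  show "\<Inter>{localization D P | P. maximal_star_ideal D st P} \<subseteq> D"
  proof
    fix x assume x: "x \<in> \<Inter>{localization D P | P. maximal_star_ideal D st P}"
    obtain a b where ab: "a \<in> D" "b \<in> D" "b \<noteq> 0" "x = a / b" using fraction_repr[of x] by blast
    obtain d a' b' where r: "d \<in> D" "d \<noteq> 0" "a' \<in> D" "b' \<in> D" "a = d * a'" "b = d * b'" "b' \<noteq> 0"
      "star_span {a', b'} = D" using star_coprime_decomp[OF ab(1-3)] by blast
    have x': "x = a' / b'" using ab r by simp
    show "x \<in> D"
    proof (cases "dunit D b'")
      case True
      hence "a' * inverse b' \<in> D" using r(3) by (auto simp: dunit_def)
      thus ?thesis using x' by (simp add: divide_inverse)
    next
      case False
      obtain P where P: "maximal_star_ideal D st P" "b' \<in> P" using nonunit_in_max[OF r(4,7) False] by blast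
      have "x \<in> localization D P" using x P(1) by blast
      then obtain c s where cs: "c \<in> D" "s \<in> D" "s \<notin> P" "x = c / s" by (auto simp: localization_def)
      have "a' * s = c * b'"
        using x' cs(4) nonzero_if_notin_max[OF P(1) cs(3)] r(7) by (simp add: field_simps)
      moreover have "c * b' \<in> P" using max_mult[OF P(1) P(2) cs(1)] by (simp add: mult.commute)
      ultimately have "a' \<in> P" using max_prime[OF P(1) r(3) cs(2)] cs(3) by auto
      thus ?thesis using star_coprime_not_both_in_max[OF r(8) nz_subset_pair[OF r(3,4,7)] P(1) _ P(2)] by blast
    qed
  qed
qed

end

lemma max_finite_comax_witness:
  assumes "maximal_star_ideal D st P" "a \<in> D" "a \<notin> P"
  obtains G where "finite G" "G \<subseteq> P" "star_span (insert a G) = D"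
proof -
  have a0: "a \<noteq> 0" using nonzero_if_notin_max[OF assms(1,3)] .
  have aD: "smul a D \<subseteq> D" using smul_D_subset_iff[OF dsubmodule_D] assms(2) by simp
  have fr: "frac_ideal D (isum P (smul a D))"
    using frac_ideal_isum[OF max_frac_ideal[OF assms(1)] frac_ideal_principal[OF a0] max_subset_D[OF assms(1)] aD] .
  have "1 \<in> st (isum P (smul a D))" using st_isum_max_eq_D[OF assms] by simp
  then obtain J where J: "frac_ideal D J" "fin_gen D J" "J \<subseteq> isum P (smul a D)" "1 \<in> st J"
    using fin_char fr unfolding finite_character_def by blast
  obtain F where F: "finite F" "J = dspan D F" using J(2) by (auto simp: fin_gen_def)
  have "\<exists>p\<in>P. \<exists>r\<in>D. f = p + r * a" if "f \<in> F" for f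
    using that J(3) F(2) dspan_superset by (fastforce simp: isum_def smul_def mult.commute)
  then obtain p where p: "\<And>f. f \<in> F \<Longrightarrow> p f \<in> P \<and> (\<exists>r\<in>D. f = p f + r * a)" by metis
  define G where "G = p ` F"
  have GP: "G \<subseteq> P" using p by (auto simp: G_def)
  have nz: "nz_subset (insert a G)" using GP max_subset_D[OF assms(1)] assms(2) a0 by (intro nz_subsetI) auto
  have "F \<subseteq> dspan D (insert a G)"
  proof
    fix f assume "f \<in> F"
    then obtain r where r: "r \<in> D" "f = p f + r * a" using p by blast
    have "p f \<in> dspan D (insert a G)" "a \<in> dspan D (insert a G)"
      using \<open>f \<in> F\<close> dspan_superset[of "insert a G"] by (auto simp: G_def)
    hence "p f + r * a \<in> dspan D (insert a G)" using dspan_add dspan_mult r(1) by blast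
    thus "f \<in> dspan D (insert a G)" using r(2) by simp
  qed
  hence "J \<subseteq> dspan D (insert a G)" using F(2) dspan_least[OF dsubmodule_dspan] by simp
  hence "1 \<in> star_span (insert a G)" using st_mono[OF J(1) frac_ideal_dspan_nz_subset[OF nz]] J(4) by blast
  hence "star_span (insert a G) = D"
    using star_ideal_eq_D_if_one[OF star_ideal_star_span[OF nz] star_span_subset_D[OF nz]] by simp
  thus ?thesis using that[of G] F(1) GP by (simp add: G_def)
qed

text \<open>If \<open>y\<close> lay in two maximal *-ideals \<open>P \<noteq> Q\<close>, take \<open>a \<in> Q - P\<close> and \<open>G \<subseteq> P\<close> as above:
  the *-ideals generated by \<open>y, G\<close> and by \<open>y, a\<close> are proper, contain \<open>y\<close>, and are *-comaximal.\<close>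

lemma star_homog_unique_max:
  assumes h: "star_homog D st (smul y D)"
    and P: "maximal_star_ideal D st P" and Q: "maximal_star_ideal D st Q" and yPQ: "y \<in> P" "y \<in> Q"
  shows "P = Q"
proof (rule ccontr)
  assume "P \<noteq> Q"
  moreover have "Q \<subseteq> P \<Longrightarrow> P = Q"
    using max_maximal[OF Q max_star_ideal[OF P] max_subset_D[OF P]] P by (simp add: maximal_star_ideal_def)
  ultimately obtain a where a: "a \<in> Q" "a \<notin> P" by blast
  have aD: "a \<in> D" and yD: "y \<in> D" using a yPQ max_subset_D[OF Q] max_subset_D[OF P] by blast+
  have y0: "y \<noteq> 0" using h frac_ideal_smul_D_nonzero
    by (simp add: star_homog_def star_fin_type_def star_ideal_def)
  obtain G where G: "finite G" "G \<subseteq> P" "star_span (insert a G) = D"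
    using max_finite_comax_witness[OF P aD a(2)] by blast
  have nzA: "nz_subset (insert y G)" and nzB: "nz_subset {y, a}"
    using G(2) max_subset_D[OF P] yD aD y0 by (auto intro: nz_subsetI[of _ y])
  define A where "A = star_span (insert y G)"
  define B where "B = star_span {y, a}"
  have AP: "A \<subseteq> P" using star_span_least[OF nzA max_star_ideal[OF P]] G(2) yPQ(1) by (simp add: A_def)
  have BQ: "B \<subseteq> Q" using star_span_least[OF nzB max_star_ideal[OF Q]] a(1) yPQ(2) by (simp add: B_def)
  have "A \<noteq> D" "B \<noteq> D" using AP BQ one_notin_max[OF P] one_notin_max[OF Q] D_one by blast+
  have subA: "dsubmodule D A" unfolding A_def by (rule dsubmodule_st[OF frac_ideal_dspan_nz_subset[OF nzA]])
  have subB: "dsubmodule D B" unfolding B_def by (rule dsubmodule_st[OF frac_ideal_dspan_nz_subset[OF nzB]])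
  have "insert y G \<subseteq> A" "{y, a} \<subseteq> B"
    unfolding A_def B_def by (rule star_span_superset[OF nzA], rule star_span_superset[OF nzB])
  hence yA: "smul y D \<subseteq> A" and yB: "smul y D \<subseteq> B" and aG: "insert a G \<subseteq> isum A B"
    using smul_D_subset_iff[OF subA] smul_D_subset_iff[OF subB]
      isum_superset_left[OF subB, of A] isum_superset_right[OF subA, of B] by auto
  have AD: "A \<subseteq> D" "star_fin_type D st A" and BD: "B \<subseteq> D" "star_fin_type D st B"
    unfolding A_def B_def using star_span_subset_D[OF nzA] star_span_subset_D[OF nzB]
      star_fin_type_star_span[OF nzA] star_fin_type_star_span[OF nzB] G(1) by simp_all
  have "st (isum A B) \<noteq> D"
    using h AD BD yA yB \<open>A \<noteq> D\<close> \<open>B \<noteq> D\<close> unfolding star_homog_def by blast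
  moreover have "st (isum A B) = D"
  proof -
    have nz: "nz_subset (insert a G)" using G(2) max_subset_D[OF P] aD nonzero_if_notin_max[OF P a(2)]
      by (auto intro: nz_subsetI[of _ a])
    have fr: "frac_ideal D (isum A B)"
      using frac_ideal_isum[OF frac_ideal_star_span[OF nzA] frac_ideal_star_span[OF nzB]] AD(1) BD(1)
      by (simp add: A_def B_def)
    have "dspan D (insert a G) \<subseteq> isum A B"
      using dspan_least[OF dsubmodule_isum[OF subA subB] aG] .
    hence "D \<subseteq> st (isum A B)" using st_mono[OF frac_ideal_dspan_nz_subset[OF nz] fr] G(3) by simp
    thus ?thesis using st_subset_D[OF fr isum_least[OF dsubmodule_D AD(1) BD(1)]] by blast
  qed
  ultimately show False by simp
qed

text \<open>Under *-Bezout, these are exactly the *-f-homog elements.\<close>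

definition unimax :: "'k \<Rightarrow> bool" where
  "unimax y \<longleftrightarrow> y \<in> D \<and> y \<noteq> 0 \<and> (\<exists>P. maximal_star_ideal D st P \<and> y \<in> P) \<and>
     (\<forall>P Q. maximal_star_ideal D st P \<and> maximal_star_ideal D st Q \<and> y \<in> P \<and> y \<in> Q \<longrightarrow> P = Q)"

definition max_of :: "'k \<Rightarrow> 'k set" where
  "max_of y = (THE P. maximal_star_ideal D st P \<and> y \<in> P)"

lemma unimax_D: "unimax y \<Longrightarrow> y \<in> D"
  and unimax_nonzero: "unimax y \<Longrightarrow> y \<noteq> 0"
  by (simp_all add: unimax_def)

lemma max_of_eq:
  assumes "unimax y" "maximal_star_ideal D st P" "y \<in> P"
  shows "max_of y = P"
  unfolding max_of_def using assms by (intro the_equality) (auto simp: unimax_def)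

lemma unimax_max_of:
  assumes "unimax y"
  shows "maximal_star_ideal D st (max_of y)" "y \<in> max_of y"
  using assms max_of_eq[OF assms] by (auto simp: unimax_def)

lemma unimaxI:
  assumes "y \<in> D" "y \<noteq> 0" "maximal_star_ideal D st P" "y \<in> P"
    and "\<And>Q. maximal_star_ideal D st Q \<Longrightarrow> y \<in> Q \<Longrightarrow> Q = P"
  shows "unimax y"
  unfolding unimax_def using assms by metis

lemma unimax_if_f_homog_elem:
  assumes "star_f_homog_elem D st y"
  shows "unimax y"
proof -
  have yD: "y \<in> D" and h: "star_homog D st (smul y D)"
    using assms by (auto simp: star_f_homog_elem_def star_f_homog_def)
  have y0: "y \<noteq> 0" using h frac_ideal_smul_D_nonzero by (simp add: star_homog_def star_fin_type_def star_ideal_def)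
  have "\<not> dunit D y" using h dunit_iff_smul_D[OF yD y0] by (simp add: star_homog_def)
  then obtain P where "maximal_star_ideal D st P" "y \<in> P" using nonunit_in_max[OF yD y0] by blast
  thus ?thesis using unimaxI[OF yD y0] star_homog_unique_max[OF h] by metis
qed

lemma f_homog_elem_if_unimax:
  assumes star_bezout "unimax y"
  shows "star_f_homog_elem D st y"
proof -
  have yD: "y \<in> D" and y0: "y \<noteq> 0" using assms(2) by (auto simp: unimax_def)
  note M = unimax_max_of[OF assms(2)]
  have sft: "star_fin_type D st (smul y D)"
    using star_fin_type_star_span[of "{y}"] nz_subsetI[of "{y}" y] star_span_singleton[OF y0] yD y0 by simp
  have int: "smul y D \<subseteq> D" using smul_D_subset_iff[OF dsubmodule_D] yD by simp
  have nD: "smul y D \<noteq> D"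
    using dunit_iff_smul_D[OF yD y0] dunit_notin_max[OF M(1)] M(2) by blast
  have "st (isum A B) \<noteq> D"
    if AB: "star_fin_type D st A" "A \<subseteq> D" "A \<noteq> D" "star_fin_type D st B" "B \<subseteq> D" "B \<noteq> D"
      "smul y D \<subseteq> A" "smul y D \<subseteq> B" for A B
  proof -
    have sA: "star_ideal D st A" and sB: "star_ideal D st B" using AB by (auto simp: star_fin_type_def)
    obtain PA where PA: "maximal_star_ideal D st PA" "A \<subseteq> PA" using star_ideal_in_max[OF sA AB(2,3)] by blast
    obtain PB where PB: "maximal_star_ideal D st PB" "B \<subseteq> PB" using star_ideal_in_max[OF sB AB(5,6)] by blast
    have "PA = max_of y" "PB = max_of y"
      using max_of_eq[OF assms(2) PA(1)] max_of_eq[OF assms(2) PB(1)] PA(2) PB(2) AB(7,8) mem_smul_D by blast+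
    hence "isum A B \<subseteq> max_of y" using isum_least[OF max_dsubmodule[OF M(1)]] PA PB by auto
    moreover have "frac_ideal D A" "frac_ideal D B" using sA sB by (auto simp: star_ideal_def)
    ultimately have "st (isum A B) \<subseteq> max_of y"
      using st_mono[OF frac_ideal_isum max_frac_ideal[OF M(1)]] max_st_eq[OF M(1)] AB(2,5) by simp
    thus ?thesis using one_notin_max[OF M(1)] by auto
  qed
  hence "star_homog D st (smul y D)" unfolding star_homog_def using sft int nD by blast
  thus ?thesis using assms(1) yD unfolding star_f_homog_elem_def star_f_homog_def star_bezout_def by blast
qed

lemma unimax_mult:
  assumes "unimax y" "unimax z" "max_of y = max_of z"
  shows "unimax (y * z)" "max_of (y * z) = max_of y"
proof -
  note My = unimax_max_of[OF assms(1)]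
  have yzin: "y * z \<in> max_of y" using max_mult[OF My] unimax_D[OF assms(2)] .
  have "P = max_of y" if "maximal_star_ideal D st P" "y * z \<in> P" for P
    using max_prime[OF that(1) unimax_D[OF assms(1)] unimax_D[OF assms(2)] that(2)]
      max_of_eq[OF assms(1) that(1)] max_of_eq[OF assms(2) that(1)] assms(3) by auto
  thus "unimax (y * z)"
    using unimaxI[OF _ _ My(1) yzin] unimax_D unimax_nonzero assms by (simp add: D_mult)
  thus "max_of (y * z) = max_of y" using max_of_eq My(1) yzin by blast
qed

lemma unimax_dunit_mult:
  assumes "unimax y" "dunit D u"
  shows "unimax (u * y)" "max_of (u * y) = max_of y"
proof -
  note My = unimax_max_of[OF assms(1)]
  have u: "u \<in> D" "u \<noteq> 0" using assms(2) by (auto simp: dunit_def)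
  have uyin: "u * y \<in> max_of y" using max_mult[OF My u(1)] by (simp add: mult.commute)
  have "P = max_of y" if "maximal_star_ideal D st P" "u * y \<in> P" for P
    using max_prime[OF that(1) u(1) unimax_D[OF assms(1)] that(2)] dunit_notin_max[OF that(1) assms(2)]
      max_of_eq[OF assms(1) that(1)] by auto
  thus "unimax (u * y)"
    using unimaxI[OF _ _ My(1) uyin] unimax_D[OF assms(1)] unimax_nonzero[OF assms(1)] u by (simp add: D_mult)
  thus "max_of (u * y) = max_of y" using max_of_eq My(1) uyin by blast
qed

lemma star_coprime_if_notin_max_of:
  assumes "unimax a" "r \<in> D" "r \<notin> max_of a"
  shows "star_span {a, r} = D"
  using star_comax_if_no_common_max[of r a] assms max_of_eq unimax_D unimax_nonzero
  by (metis insert_commute)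

lemma star_coprime_ddvd_mult:
  assumes "a \<in> D" "r \<in> D" "y \<in> D" "a \<noteq> 0" "star_span {a, r} = D" "ddvd D a (y * r)"
  shows "ddvd D a y"
proof (cases "y = 0")
  case True thus ?thesis by (simp add: ddvd_zero)
next
  case False
  have nz: "nz_subset {a, r}" using assms by (intro nz_subsetI[of _ a]) auto
  have nz': "nz_subset {y * a, y * r}" using assms False by (intro nz_subsetI[of _ "y * a"]) auto
  have "smul y (star_span {a, r}) = star_span {y * a, y * r}" using smul_star_span[OF False nz] by simp
  moreover have "{y * a, y * r} \<subseteq> smul a D"
    using assms(6) smul_mem[OF assms(3), of a] by (auto simp: ddvd_iff_mem_smul_D mult.commute)
  ultimately have "smul y D \<subseteq> smul a D"
    using star_span_least[OF nz' star_ideal_principal[OF assms(4)]] assms(5) by simp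
  thus ?thesis using mem_smul_D by (auto simp: ddvd_iff_mem_smul_D)
qed

lemma star_comax_smul_D_iff: "star_comax D st (smul a D) (smul b D) \<longleftrightarrow> star_span {a, b} = D"
  by (simp add: star_comax_def isum_smul_D)

lemma iprod_smul_D: "iprod D (smul a D) (smul b D) = smul (a * b) D"
proof
  show "iprod D (smul a D) (smul b D) \<subseteq> smul (a * b) D"
    unfolding iprod_def
  proof (rule dspan_least[OF dsubmodule_smul[OF dsubmodule_D]], rule subsetI)
    fix z assume "z \<in> {p * q |p q. p \<in> smul a D \<and> q \<in> smul b D}"
    then obtain d e where de: "d \<in> D" "e \<in> D" "z = (a * d) * (b * e)" by (auto simp: smul_def)
    hence "z = (a * b) * (d * e)" by (simp add: ac_simps)
    thus "z \<in> smul (a * b) D" using smul_mem[of "d * e" D "a * b"] de(1,2) by auto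
  qed
  have "a * b \<in> {p * q |p q. p \<in> smul a D \<and> q \<in> smul b D}"
    using mem_smul_D[of a] mem_smul_D[of b] by blast
  hence "a * b \<in> iprod D (smul a D) (smul b D)" unfolding iprod_def by (rule subsetD[OF dspan_superset])
  thus "smul (a * b) D \<subseteq> iprod D (smul a D) (smul b D)"
    unfolding iprod_def using smul_D_subset_iff[OF dsubmodule_dspan] by blast
qed

lemma iprod_list_smul_D: "iprod_list D (map (\<lambda>y. smul y D) ys) = smul (prod_list ys) D"
proof (induction ys)
  case (Cons y ys)
  thus ?case using iprod_smul_D by (simp add: iprod_list_def)
qed (simp add: iprod_list_def)

lemma star_prod_fhomog_decomp:
  assumes "star_prod_fhomog D st x" "x \<in> D" "x \<noteq> 0" "\<not> dunit D x"
  obtains u ys where "dunit D u" "ys \<noteq> []" "\<forall>y\<in>set ys. star_f_homog_elem D st y" "x = u * prod_list ys"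
proof -
  obtain Is where Is: "\<forall>I\<in>set Is. star_f_homog D st I" "smul x D = st (iprod_list D Is)"
    using assms(1) by (auto simp: star_prod_fhomog_def)
  have "\<exists>y. y \<in> D \<and> y \<noteq> 0 \<and> I = smul y D" if "I \<in> set Is" for I
    by (rule star_f_homog_principalE[OF bspec[OF Is(1) that]]) blast
  then obtain g where g: "\<And>I. I \<in> set Is \<Longrightarrow> g I \<in> D \<and> g I \<noteq> 0 \<and> I = smul (g I) D"
    by (metis bchoice)
  define ys where "ys = map g Is"
  have Is_ys: "Is = map (\<lambda>y. smul y D) ys" unfolding ys_def using g by (simp add: map_idI)
  have fh: "\<forall>y\<in>set ys. star_f_homog_elem D st y"
    using g Is(1) by (auto simp: ys_def star_f_homog_elem_def)
  have p0: "prod_list ys \<noteq> 0" using g by (auto simp: ys_def prod_list_zero_iff)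
  have "smul x D = smul (prod_list ys) D"
    using Is(2) iprod_list_smul_D st_principal[OF p0] by (simp add: Is_ys)
  then obtain u where u: "dunit D u" "x = u * prod_list ys"
    using dassoc_if_smul_D_eq[OF p0 assms(3)] by (auto simp: dassoc_def)
  moreover have "ys \<noteq> []" using u assms(4) by auto
  ultimately show ?thesis using that fh by blast
qed

lemma merge_unimax_factors:
  assumes "ys \<noteq> []" "\<forall>y\<in>set ys. unimax y"
  obtains zs where "zs \<noteq> []" "\<forall>z\<in>set zs. unimax z" "distinct (map max_of zs)" "prod_list zs = prod_list ys"
proof -
  have "\<exists>zs. zs \<noteq> [] \<and> (\<forall>z\<in>set zs. unimax z) \<and> distinct (map max_of zs) \<and> prod_list zs = prod_list ys"
    using assms
  proof (induction ys)
    case (Cons y ys)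
    have y: "unimax y" using Cons.prems by simp
    show ?case
    proof (cases "ys = []")
      case True thus ?thesis using y by (intro exI[of _ "[y]"]) auto
    next
      case False
      then obtain zs where zs: "zs \<noteq> []" "\<forall>z\<in>set zs. unimax z" "distinct (map max_of zs)"
        "prod_list zs = prod_list ys" using Cons by auto
      show ?thesis
      proof (cases "max_of y \<in> set (map max_of zs)")
        case True
        then obtain k where k: "k < length zs" "max_of (zs ! k) = max_of y" by (auto simp: in_set_conv_nth)
        have "unimax (zs ! k)" using zs(2) k(1) by simp
        note yk = unimax_mult[OF y this k(2)[symmetric]]
        define zs' where "zs' = zs[k := y * zs ! k]"
        have "\<forall>z\<in>set zs'. unimax z"
          using set_update_subset_insert[of zs k] zs(2) yk(1) k(1) by (auto simp: zs'_def)
        moreover have "map max_of zs' = map max_of zs"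
          unfolding zs'_def using map_update_eq_image[OF k(1), of max_of "y * zs ! k"] yk(2) k(2) by simp
        hence "distinct (map max_of zs')" using zs(3) by simp
        moreover have "prod_list zs' = prod_list (y # ys)"
          using prod_list_update_mult[OF k(1)] zs(4) by (simp add: zs'_def)
        ultimately show ?thesis using zs(1) by (intro exI[of _ zs']) (simp add: zs'_def)
      next
        case False
        thus ?thesis using zs y by (intro exI[of _ "y # zs"]) auto
      qed
    qed
  qed simp
  thus ?thesis using that by blast
qed

lemma star_comax_if_distinct_max_of:
  assumes "\<forall>z\<in>set zs. unimax z" "distinct (map max_of zs)" "i < length zs" "j < length zs" "i \<noteq> j"
  shows "star_comax D st (smul (zs ! i) D) (smul (zs ! j) D)"
proof -
  have si: "unimax (zs ! i)" and sj: "unimax (zs ! j)" using assms by auto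
  have "max_of (zs ! i) \<noteq> max_of (zs ! j)" using assms(2-5) by (auto simp: distinct_conv_nth)
  hence "\<not> (\<exists>P. maximal_star_ideal D st P \<and> zs ! i \<in> P \<and> zs ! j \<in> P)"
    using max_of_eq[OF si] max_of_eq[OF sj] by metis
  thus ?thesis
    using star_comax_if_no_common_max[OF unimax_D[OF si] unimax_D[OF sj] unimax_nonzero[OF sj]]
    by (simp add: star_comax_smul_D_iff)
qed

lemma comax_fhomog_fact_exists:
  assumes star_bezout "dunit D u" "ys \<noteq> []" "\<forall>y\<in>set ys. unimax y"
  shows "\<exists>xs. comax_fhomog_fact D st (u * prod_list ys) xs"
proof -
  obtain zs where zs: "zs \<noteq> []" "\<forall>z\<in>set zs. unimax z" "distinct (map max_of zs)" "prod_list zs = prod_list ys"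
    using merge_unimax_factors[OF assms(3,4)] by blast
  have k: "0 < length zs" using zs(1) by simp
  note u0 = unimax_dunit_mult[OF _ assms(2), of "zs ! 0"]
  define zs' where "zs' = zs[0 := u * zs ! 0]"
  have a: "\<forall>z\<in>set zs'. unimax z"
    using set_update_subset_insert[of zs 0] zs(2) u0(1) k by (auto simp: zs'_def)
  moreover have "map max_of zs' = map max_of zs"
    unfolding zs'_def using map_update_eq_image[OF k, of max_of "u * zs ! 0"] u0(2) zs(2) k by simp
  hence "distinct (map max_of zs')" using zs(3) by simp
  moreover have "prod_list zs' = u * prod_list ys"
    using prod_list_update_mult[OF k, of u] zs(4) by (simp add: zs'_def)
  ultimately have "comax_fhomog_fact D st (u * prod_list ys) zs'"
    unfolding comax_fhomog_fact_def
    using f_homog_elem_if_unimax[OF assms(1)] star_comax_if_distinct_max_of by blast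
  thus ?thesis by blast
qed

lemma comax_fhomog_fact_unimax:
  assumes "comax_fhomog_fact D st x ys"
  shows "\<forall>y\<in>set ys. unimax y" "distinct (map max_of ys)"
proof -
  show a: "\<forall>y\<in>set ys. unimax y" using assms unimax_if_f_homog_elem by (auto simp: comax_fhomog_fact_def)
  show "distinct (map max_of ys)"
    unfolding distinct_conv_nth
  proof (intro allI impI notI)
    fix i j assume ij: "i < length (map max_of ys)" "j < length (map max_of ys)" "i \<noteq> j"
      and eq: "map max_of ys ! i = map max_of ys ! j"
    have si: "unimax (ys ! i)" and sj: "unimax (ys ! j)" using a ij by auto
    have "star_span {ys ! i, ys ! j} = D"
      using assms ij by (auto simp: comax_fhomog_fact_def star_comax_smul_D_iff)
    moreover have "ys ! j \<in> max_of (ys ! i)" using eq ij unimax_max_of(2)[OF sj] by simp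
    ultimately show False
      using star_coprime_not_both_in_max[OF _ nz_subset_pair[OF unimax_D[OF si] unimax_D[OF sj] unimax_nonzero[OF sj]]]
        unimax_max_of[OF si] by blast
  qed
qed

lemma comax_fhomog_fact_max_ideals:
  assumes "comax_fhomog_fact D st x ys"
  shows "set (map max_of ys) = {P. maximal_star_ideal D st P \<and> x \<in> P}"
proof (intro set_eqI iffI)
  have u: "\<forall>y\<in>set ys. unimax y" using comax_fhomog_fact_unimax[OF assms] by simp
  have sD: "set ys \<subseteq> D" and x: "x = prod_list ys"
    using u unimax_D assms by (auto simp: comax_fhomog_fact_def)
  fix P
  {
    assume "P \<in> set (map max_of ys)"
    then obtain y where y: "y \<in> set ys" "P = max_of y" by auto
    obtain k where "k \<in> D" "x = y * k" using ddvd_prod_list[OF sD y(1)] x by (auto simp: ddvd_def)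
    hence "x \<in> max_of y" using max_mult[OF unimax_max_of[of y]] u y(1) by simp
    thus "P \<in> {P. maximal_star_ideal D st P \<and> x \<in> P}" using unimax_max_of(1)[of y] u y by simp
  next
    assume "P \<in> {P. maximal_star_ideal D st P \<and> x \<in> P}"
    hence P: "maximal_star_ideal D st P" "prod_list ys \<in> P" using x by auto
    then obtain y where "y \<in> set ys" "y \<in> P" using max_prod_list[OF P(1) sD] by blast
    thus "P \<in> set (map max_of ys)" using max_of_eq[OF _ P(1)] u by force
  }
qed

lemma prod_list_others_notin_max_of:
  assumes "\<forall>y\<in>set xs. unimax y" "distinct (map max_of xs)" "i < length xs"
  shows "prod_list (take i xs @ drop (Suc i) xs) \<notin> max_of (xs ! i)"
proof
  let ?rest = "take i xs @ drop (Suc i) xs"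
  have Mi: "maximal_star_ideal D st (max_of (xs ! i))" using unimax_max_of assms by simp
  have sub: "set ?rest \<subseteq> set xs" by (auto dest: in_set_takeD in_set_dropD)
  assume "prod_list ?rest \<in> max_of (xs ! i)"
  then obtain z where z: "z \<in> set ?rest" "z \<in> max_of (xs ! i)"
    using max_prod_list[OF Mi] sub assms(1) unimax_D by blast
  have "max_of z \<noteq> max_of (xs ! i)" using distinct_map_split_nth[OF assms(2,3) z(1)] .
  thus False using max_of_eq[OF _ Mi z(2)] assms(1) sub z(1) by blast
qed

lemma comax_fhomog_fact_assoc:
  assumes "comax_fhomog_fact D st x xs" "comax_fhomog_fact D st x ys"
    and "i < length xs" "j < length ys" "max_of (xs ! i) = max_of (ys ! j)"
  shows "dassoc D (xs ! i) (ys ! j)"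
proof -
  note sx = comax_fhomog_fact_unimax[OF assms(1)] and sy = comax_fhomog_fact_unimax[OF assms(2)]
  define a where "a = xs ! i"
  define b where "b = ys ! j"
  define ra where "ra = prod_list (take i xs @ drop (Suc i) xs)"
  define rb where "rb = prod_list (take j ys @ drop (Suc j) ys)"
  have ua: "unimax a" and ub: "unimax b" using sx(1) sy(1) assms(3,4) by (auto simp: a_def b_def)
  have xa: "x = a * ra" and xb: "x = b * rb"
    using prod_list_split_nth[OF assms(3)] prod_list_split_nth[OF assms(4)] assms(1,2)
    by (simp_all add: comax_fhomog_fact_def a_def b_def ra_def rb_def)
  have "set (take i xs @ drop (Suc i) xs) \<subseteq> D" "set (take j ys @ drop (Suc j) ys) \<subseteq> D"
    using sx(1) sy(1) unimax_D by (auto dest: in_set_takeD in_set_dropD)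
  hence rD: "ra \<in> D" "rb \<in> D" unfolding ra_def rb_def using D_prod_list by blast+
  have "ra \<notin> max_of b" "rb \<notin> max_of a"
    using prod_list_others_notin_max_of[OF sx assms(3)] prod_list_others_notin_max_of[OF sy assms(4)] assms(5)
    by (simp_all add: a_def b_def ra_def rb_def)
  hence cop: "star_span {b, ra} = D" "star_span {a, rb} = D"
    using star_coprime_if_notin_max_of ua ub rD by blast+
  have eq: "b * rb = a * ra" using xa xb by simp
  have "ddvd D a (b * rb)" unfolding ddvd_def using rD(1) eq by auto
  hence "ddvd D a b"
    using star_coprime_ddvd_mult[OF unimax_D[OF ua] rD(2) unimax_D[OF ub] unimax_nonzero[OF ua] cop(2)] by blast
  moreover have "ddvd D b (a * ra)" unfolding ddvd_def using rD(2) eq by (intro bexI[of _ rb]) simp_all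
  hence "ddvd D b a"
    using star_coprime_ddvd_mult[OF unimax_D[OF ub] rD(1) unimax_D[OF ua] unimax_nonzero[OF ub] cop(1)] by blast
  ultimately show ?thesis
    using dassoc_if_ddvd[OF unimax_nonzero[OF ua] unimax_nonzero[OF ub]] by (simp add: a_def b_def)
qed

lemma comax_fhomog_fact_unique:
  assumes "comax_fhomog_fact D st x xs" "comax_fhomog_fact D st x ys"
  shows "length ys = length xs \<and> (\<exists>\<sigma>. bij_betw \<sigma> {..<length xs} {..<length xs} \<and>
           (\<forall>i<length xs. dassoc D (xs ! i) (ys ! \<sigma> i)))"
proof -
  have "set (map max_of xs) = set (map max_of ys)"
    using comax_fhomog_fact_max_ideals[OF assms(1)] comax_fhomog_fact_max_ideals[OF assms(2)] by simp
  then obtain \<sigma> where \<sigma>: "length ys = length xs" "bij_betw \<sigma> {..<length xs} {..<length xs}"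
    "\<And>i. i < length xs \<Longrightarrow> \<sigma> i < length xs \<and> max_of (ys ! \<sigma> i) = max_of (xs ! i)"
    using distinct_map_reindex comax_fhomog_fact_unimax(2)[OF assms(1)] comax_fhomog_fact_unimax(2)[OF assms(2)]
    by blast
  have "dassoc D (xs ! i) (ys ! \<sigma> i)" if "i < length xs" for i
    using comax_fhomog_fact_assoc[OF assms that] \<sigma>(1) \<sigma>(3)[OF that] by simp
  thus ?thesis using \<sigma>(1,2) by blast
qed

lemma unimax_decomp_if_star_prod_fhomog:
  assumes "star_prod_fhomog D st x" "x \<in> D" "x \<noteq> 0" "\<not> dunit D x"
  obtains u ys where "dunit D u" "ys \<noteq> []" "\<forall>y\<in>set ys. unimax y" "x = u * prod_list ys" star_bezout
proof -
  obtain u ys where u: "dunit D u" "ys \<noteq> []" "\<forall>y\<in>set ys. star_f_homog_elem D st y" "x = u * prod_list ys"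
    using star_prod_fhomog_decomp[OF assms] by blast
  obtain y where "y \<in> set ys" using u(2) by (cases ys) auto
  hence star_bezout using u(3) star_bezout_if_f_homog[of "smul y D"] by (simp add: star_f_homog_elem_def)
  thus ?thesis using that u unimax_if_f_homog_elem by blast
qed

lemma max_containing_unit_prod:
  assumes "dunit D u" "\<forall>y\<in>set ys. unimax y" "maximal_star_ideal D st P" "u * prod_list ys \<in> P"
  shows "P \<in> max_of ` set ys"
proof -
  have "set (u # ys) \<subseteq> D" using assms(1,2) unimax_D by (auto simp: dunit_def)
  from max_prod_list[OF assms(3) this] obtain y where y: "y \<in> set (u # ys)" "y \<in> P"
    using assms(4) by auto
  moreover have "u \<notin> P" using dunit_notin_max[OF assms(3,1)] .
  ultimately have "y \<in> set ys" by auto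
  moreover from this have "max_of y = P" using max_of_eq[OF _ assms(3) y(2)] assms(2) by blast
  ultimately show ?thesis by blast
qed

lemma prime_ideal_prod_list:
  assumes "prime_ideal D R" "set xs \<subseteq> D" "prod_list xs \<in> R"
  shows "\<exists>x\<in>set xs. x \<in> R"
  using assms(2,3)
proof (induction xs)
  case Nil
  have "R \<subseteq> D" "dsubmodule D R" "R \<noteq> D" using assms(1) by (auto simp: prime_ideal_def)
  thus ?case using Nil dsubmodule_eq_D_if_one by auto
next
  case (Cons a xs)
  have "\<forall>a\<in>D. \<forall>b\<in>D. a * b \<in> R \<longrightarrow> a \<in> R \<or> b \<in> R" using assms(1) by (simp add: prime_ideal_def)
  thus ?case using Cons D_prod_list[of xs] by auto
qed

lemma prime_ideal_contains_unimax_factor: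
  assumes "prime_ideal D R" "dunit D u" "\<forall>y\<in>set ys. unimax y" "u * prod_list ys \<in> R"
  shows "\<exists>y\<in>set ys. y \<in> R"
proof -
  have uD: "u \<in> D" "inverse u \<in> D" "u \<noteq> 0" using assms(2) by (auto simp: dunit_def)
  have R: "R \<subseteq> D" "dsubmodule D R" "R \<noteq> D" using assms(1) by (auto simp: prime_ideal_def)
  have "u \<notin> R"
  proof
    assume "u \<in> R"
    hence "inverse u * u \<in> R" using dsubmodule_mult[OF R(2) uD(2)] by blast
    hence "1 \<in> R" using uD(3) by simp
    thus False using dsubmodule_eq_D_if_one[OF R(2,1)] R(3) by blast
  qed
  have "set (u # ys) \<subseteq> D" using uD(1) assms(3) unimax_D by auto
  from prime_ideal_prod_list[OF assms(1) this] obtain z where "z \<in> set (u # ys)" "z \<in> R"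
    using assms(4) by auto
  thus ?thesis using \<open>u \<notin> R\<close> by auto
qed

lemma star_IRKT_if_unimax_factorizations:
  assumes star_bezout
    and fact: "\<And>x. x \<in> D \<Longrightarrow> x \<noteq> 0 \<Longrightarrow> \<not> dunit D x \<Longrightarrow>
      \<exists>u ys. dunit D u \<and> (\<forall>y\<in>set ys. unimax y) \<and> x = u * prod_list ys"
  shows "star_IRKT D st"
proof -
  have fin: "finite {P. maximal_star_ideal D st P \<and> x \<in> P}" if x: "x \<in> D" "x \<noteq> 0" for x
  proof (cases "dunit D x")
    case True
    hence "{P. maximal_star_ideal D st P \<and> x \<in> P} = {}" using dunit_notin_max by blast
    thus ?thesis by (simp only: finite.emptyI)
  next
    case False
    then obtain u ys where u: "dunit D u" "\<forall>y\<in>set ys. unimax y" "x = u * prod_list ys"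
      using fact[OF x] by blast
    hence "{P. maximal_star_ideal D st P \<and> x \<in> P} \<subseteq> max_of ` set ys"
      using max_containing_unit_prod by blast
    thus ?thesis by (rule finite_subset) simp
  qed
  have indep: "\<not> (R \<subseteq> P \<and> R \<subseteq> Q)"
    if PQR: "maximal_star_ideal D st P" "maximal_star_ideal D st Q" "P \<noteq> Q" "prime_ideal D R" "R \<noteq> {0}"
    for P Q R
  proof
    assume RPQ: "R \<subseteq> P \<and> R \<subseteq> Q"
    have "dsubmodule D R" using PQR(4) by (simp add: prime_ideal_def)
    then obtain r where r: "r \<in> R" "r \<noteq> 0" using PQR(5) dsubmodule_zero by blast
    have "r \<in> D" "\<not> dunit D r" using r(1) RPQ max_subset_D[OF PQR(1)] dunit_notin_max[OF PQR(1)] by blast+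
    then obtain u ys where u: "dunit D u" "\<forall>y\<in>set ys. unimax y" "r = u * prod_list ys"
      using fact[OF _ r(2)] by blast
    then obtain y where "y \<in> set ys" "y \<in> R" using prime_ideal_contains_unimax_factor[OF PQR(4)] r(1) by blast
    hence "max_of y = P" "max_of y = Q" using max_of_eq[OF _ PQR(1)] max_of_eq[OF _ PQR(2)] RPQ u(2) by blast+
    thus False using PQR(3) by simp
  qed
  show ?thesis
    unfolding star_IRKT_def
    using valuation_dom_localization[OF assms(1)] Inter_localizations[OF assms(1)] fin indep
    by (intro conjI) blast+
qed

lemma factorization_if_star_prod_fhomog:
  assumes H: "\<forall>x\<in>D. x \<noteq> 0 \<and> \<not> dunit D x \<longrightarrow> star_prod_fhomog D st x"
  shows "gcd_domain D \<and> star_IRKT D st \<and>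
    (\<forall>x\<in>D. x \<noteq> 0 \<and> \<not> dunit D x \<longrightarrow>
      (\<exists>xs. comax_fhomog_fact D st x xs \<and>
        (\<forall>ys. comax_fhomog_fact D st x ys \<longrightarrow>
          length ys = length xs \<and>
          (\<exists>\<sigma>. bij_betw \<sigma> {..<length xs} {..<length xs} \<and>
            (\<forall>i<length xs. dassoc D (xs ! i) (ys ! \<sigma> i))))))"
    (is "_ \<and> _ \<and> ?factorizations")
proof -
  have hx: "star_prod_fhomog D st x" if "x \<in> D" "x \<noteq> 0" "\<not> dunit D x" for x
    using H that by blast
  have bezout: star_bezout
  proof (cases "\<forall>x\<in>D. x \<noteq> 0 \<longrightarrow> dunit D x")
    case False
    then obtain x where x: "x \<in> D" "x \<noteq> 0" "\<not> dunit D x" by blast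
    show ?thesis by (rule unimax_decomp_if_star_prod_fhomog[OF hx[OF x] x])
  qed (rule star_bezout_if_all_units)
  have IRKT: "star_IRKT D st"
  proof (rule star_IRKT_if_unimax_factorizations[OF bezout])
    fix x assume x: "x \<in> D" "x \<noteq> 0" "\<not> dunit D x"
    obtain u ys where "dunit D u" "\<forall>y\<in>set ys. unimax y" "x = u * prod_list ys"
      by (rule unimax_decomp_if_star_prod_fhomog[OF hx[OF x] x])
    thus "\<exists>u ys. dunit D u \<and> (\<forall>y\<in>set ys. unimax y) \<and> x = u * prod_list ys" by blast
  qed
  have "\<exists>xs. comax_fhomog_fact D st x xs" if x: "x \<in> D" "x \<noteq> 0" "\<not> dunit D x" for x
  proof -
    obtain u ys where "dunit D u" "ys \<noteq> []" "\<forall>y\<in>set ys. unimax y" "x = u * prod_list ys"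
      by (rule unimax_decomp_if_star_prod_fhomog[OF hx[OF x] x])
    thus ?thesis using comax_fhomog_fact_exists[OF bezout] by blast
  qed
  hence ?factorizations using comax_fhomog_fact_unique by (metis (no_types))
  thus ?thesis using gcd_domain_if_star_bezout[OF bezout] IRKT by blast
qed

end

locale gcd_irkt = star_domain D st for D :: "'k::field set" and st +
  assumes is_gcd: "gcd_domain D" and is_irkt: "star_IRKT D st"
begin

lemma valuation_localization_max: "maximal_star_ideal D st Q \<Longrightarrow> valuation_dom (localization D Q)"
  and finite_max_containing: "x \<in> D \<Longrightarrow> x \<noteq> 0 \<Longrightarrow> finite {P. maximal_star_ideal D st P \<and> x \<in> P}"
  using is_irkt by (simp_all add: star_IRKT_def)

lemma no_common_prime:
  "maximal_star_ideal D st P \<Longrightarrow> maximal_star_ideal D st Q \<Longrightarrow> P \<noteq> Q \<Longrightarrow>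
    prime_ideal D R \<Longrightarrow> R \<noteq> {0} \<Longrightarrow> \<not> (R \<subseteq> P \<and> R \<subseteq> Q)"
  using is_irkt unfolding star_IRKT_def by blast

lemma localizationE:
  assumes "v \<in> localization D Q"
  obtains c t where "c \<in> D" "t \<in> D" "t \<notin> Q" "v = c / t"
  using assms unfolding localization_def by blast

lemma D_in_localization:
  assumes "maximal_star_ideal D st Q" "a \<in> D"
  shows "a \<in> localization D Q"
proof -
  have "a = a / 1" by simp
  thus ?thesis using assms one_notin_max[OF assms(1)] D_one unfolding localization_def by blast
qed

lemma localization_mult:
  assumes Q: "maximal_star_ideal D st Q" and "v \<in> localization D Q" "w \<in> localization D Q"
  shows "v * w \<in> localization D Q"
proof -
  obtain a s where a: "a \<in> D" "s \<in> D" "s \<notin> Q" "v = a / s" using assms(2) by (rule localizationE)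
  obtain b t where b: "b \<in> D" "t \<in> D" "t \<notin> Q" "w = b / t" using assms(3) by (rule localizationE)
  have "s * t \<notin> Q" using max_prime[OF Q a(2) b(2)] a(3) b(3) by blast
  moreover have "v * w = (a * b) / (s * t)" using a b by simp
  ultimately show ?thesis using a b by (auto simp: localization_def)
qed

lemma localization_add:
  assumes Q: "maximal_star_ideal D st Q" and "v \<in> localization D Q" "w \<in> localization D Q"
  shows "v + w \<in> localization D Q"
proof -
  obtain a s where a: "a \<in> D" "s \<in> D" "s \<notin> Q" "v = a / s" using assms(2) by (rule localizationE)
  obtain b t where b: "b \<in> D" "t \<in> D" "t \<notin> Q" "w = b / t" using assms(3) by (rule localizationE)
  have "s * t \<notin> Q" using max_prime[OF Q a(2) b(2)] a(3) b(3) by blast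
  moreover have "v + w = (a * t + b * s) / (s * t)"
    using a b nonzero_if_notin_max[OF Q] by (simp add: field_simps)
  ultimately show ?thesis using a b by (auto simp: localization_def)
qed

lemma localization_power:
  "maximal_star_ideal D st Q \<Longrightarrow> v \<in> localization D Q \<Longrightarrow> v ^ n \<in> localization D Q"
  by (induction n) (auto intro: localization_mult D_in_localization)

lemma smul_localization_mult:
  assumes "maximal_star_ideal D st Q" "y \<in> smul x (localization D Q)" "v \<in> localization D Q"
  shows "y * v \<in> smul x (localization D Q)"
proof -
  obtain w where w: "w \<in> localization D Q" "y = x * w" using assms(2) by (auto simp: smul_def)
  have e: "y * v = x * (w * v)" using w(2) by (simp add: mult.assoc)
  show ?thesis unfolding e by (rule smul_mem[OF localization_mult[OF assms(1) w(1) assms(3)]])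
qed

lemma smul_localization_D_subset_max:
  assumes Q: "maximal_star_ideal D st Q" "x \<in> Q" and "y \<in> D" "y \<in> smul x (localization D Q)"
  shows "y \<in> Q"
proof -
  obtain v where v: "v \<in> localization D Q" "y = x * v" using assms(4) by (auto simp: smul_def)
  obtain c t where ct: "c \<in> D" "t \<in> D" "t \<notin> Q" "v = c / t" using v(1) by (rule localizationE)
  have "y * t = x * c" using v(2) ct(4) nonzero_if_notin_max[OF Q(1) ct(3)] by (simp add: field_simps)
  hence "y * t \<in> Q" using max_mult[OF Q ct(1)] by simp
  thus ?thesis using max_prime[OF Q(1) assms(3) ct(2)] ct(3) by blast
qed

text \<open>In a valuation overring coprime elements cannot both lie in the maximal ideal, so coprime
  elements are *-comaximal.\<close>

lemma star_span_pair_eq_D_if_dcoprime: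
  assumes ab: "a \<in> D" "b \<in> D" "b \<noteq> 0" "dcoprime a b"
  shows "star_span {a, b} = D"
proof (rule star_comax_if_no_common_max[OF ab(1-3)], rule notI, elim exE conjE)
  fix P assume P: "maximal_star_ideal D st P" and aP: "a \<in> P" and bP: "b \<in> P"
  have not_div: False
    if cd: "c \<in> D" "d \<in> D" "c \<noteq> 0" "c \<in> P" "dcoprime d c" "d / c \<in> localization D P" for c d
  proof -
    obtain e s where es: "e \<in> D" "s \<in> D" "s \<notin> P" "d / c = e / s" using cd(6) by (rule localizationE)
    have "d * s = c * e" using es(4) cd(3) nonzero_if_notin_max[OF P es(3)] by (simp add: field_simps)
    hence "ddvd D c s" using dcoprime_ddvd_mult[OF is_gcd cd(2,1) es(2) cd(5)] es(1) by (auto simp: ddvd_def)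
    thus False using max_mult[OF P cd(4)] es(3) by (auto simp: ddvd_def)
  qed
  show False
  proof (cases "a = 0")
    case True
    hence "ddvd D b 1" using ab(2,4) ddvd_zero ddvd_refl by (auto simp: dcoprime_def)
    then obtain k where "k \<in> D" "1 = b * k" by (auto simp: ddvd_def)
    thus False using max_mult[OF P bP] one_notin_max[OF P] by metis
  next
    case False
    hence "a / b \<in> localization D P \<or> b / a \<in> localization D P"
      using valuation_localization_max[OF P] ab(3) unfolding valuation_dom_def
      by (metis divide_eq_0_iff inverse_divide)
    thus False using not_div[OF ab(2,1,3) bP ab(4)] not_div[OF ab(1,2) False aP dcoprime_commute[OF ab(4)]] by blast
  qed
qed

lemma star_span_pair_principal:
  assumes "a \<in> D" "b \<in> D" "b \<noteq> 0"
  obtains d where "d \<in> D" "d \<noteq> 0" "star_span {a, b} = smul d D"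
proof -
  obtain d a' b' where r: "d \<in> D" "d \<noteq> 0" "a' \<in> D" "b' \<in> D" "a = d * a'" "b = d * b'" "dcoprime a' b'"
    using gcd_decomp[OF is_gcd assms] by blast
  have b0: "b' \<noteq> 0" using r assms(3) by auto
  have "smul d (star_span {a', b'}) = star_span {a, b}"
    using smul_star_span[OF r(2) nz_subset_pair[OF r(3,4) b0]] r by simp
  thus ?thesis using that r(1,2) star_span_pair_eq_D_if_dcoprime[OF r(3,4) b0 r(7)] by simp
qed

lemma star_span_insert_principal:
  assumes "a \<in> D" "nz_subset S" "star_span S = smul g D" "g \<in> D" "g \<noteq> 0"
  shows "star_span (insert a S) = star_span {a, g}"
proof -
  have nzA: "nz_subset (insert a S)" and nz2: "nz_subset {a, g}"
    using assms(1,2,4,5) by (auto simp: nz_subset_def)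
  have "S \<subseteq> smul g D" using star_span_superset[OF assms(2)] assms(3) by simp
  moreover have "smul g D \<subseteq> star_span {a, g}"
    using smul_D_subset_iff[OF dsubmodule_st[OF frac_ideal_dspan_nz_subset[OF nz2]]] star_span_superset[OF nz2]
    by simp
  ultimately have "insert a S \<subseteq> star_span {a, g}" using star_span_superset[OF nz2] by blast
  moreover have "star_span S \<subseteq> star_span (insert a S)"
    using star_span_mono[OF assms(2) nzA] star_span_superset[OF nzA] by blast
  hence "{a, g} \<subseteq> star_span (insert a S)" using assms(3) mem_smul_D star_span_superset[OF nzA] by blast
  ultimately show ?thesis using star_span_mono[OF nzA nz2] star_span_mono[OF nz2 nzA] by blast
qed

lemma star_span_principal:
  assumes "finite S" "nz_subset S"
  obtains d where "d \<in> D" "d \<noteq> 0" "star_span S = smul d D"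
proof -
  have "nz_subset S \<longrightarrow> (\<exists>d\<in>D. d \<noteq> 0 \<and> star_span S = smul d D)"
    using assms(1)
  proof (induction S rule: finite_induct)
    case empty thus ?case by (simp add: nz_subset_def)
  next
    case (insert a S)
    show ?case
    proof
      assume nzA: "nz_subset (insert a S)"
      hence aD: "a \<in> D" by (simp add: nz_subset_def)
      show "\<exists>d\<in>D. d \<noteq> 0 \<and> star_span (insert a S) = smul d D"
      proof (cases "nz_subset S")
        case True
        then obtain g where g: "g \<in> D" "g \<noteq> 0" "star_span S = smul g D" using insert.IH by blast
        obtain d where "d \<in> D" "d \<noteq> 0" "star_span {a, g} = smul d D"
          using star_span_pair_principal[OF aD g(1,2)] by blast
        thus ?thesis using star_span_insert_principal[OF aD True g(3,1,2)] by blast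
      next
        case False
        hence "\<forall>s\<in>S. s = 0" "a \<noteq> 0" using nzA by (auto simp: nz_subset_def)
        hence "insert a S \<subseteq> smul a D" using mem_smul_D dsubmodule_zero[OF dsubmodule_smul[OF dsubmodule_D]] by auto
        hence "star_span (insert a S) \<subseteq> smul a D"
          using star_span_least[OF nzA star_ideal_principal[OF \<open>a \<noteq> 0\<close>]] by simp
        moreover have "smul a D \<subseteq> star_span (insert a S)"
          using smul_D_subset_iff[OF dsubmodule_st[OF frac_ideal_dspan_nz_subset[OF nzA]]] star_span_superset[OF nzA]
          by simp
        ultimately show ?thesis using aD \<open>a \<noteq> 0\<close> by blast
      qed
    qed
  qed
  thus ?thesis using that assms(2) by blast
qed

lemma star_bezout_if_gcd_irkt: star_bezout
  unfolding star_bezout_def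
proof (intro allI impI)
  fix J assume "star_fin_type D st J"
  then obtain J0 where J0: "frac_ideal D J0" "fin_gen D J0" "J = st J0" by (auto simp: star_fin_type_def)
  obtain F where F: "finite F" "J0 = dspan D F" using J0(2) by (auto simp: fin_gen_def)
  obtain d where d: "d \<in> D" "d \<noteq> 0" "smul d J0 \<subseteq> D" using J0(1) by (auto simp: frac_ideal_def)
  define F' where "F' = (\<lambda>y. d * y) ` F"
  have e: "smul d J0 = dspan D F'" using dspan_smul[OF d(2)] F(2) by (simp add: F'_def)
  have F'D: "F' \<subseteq> D" using e d(3) dspan_superset by blast
  obtain w where w: "w \<in> J0" "w \<noteq> 0" using J0(1) by (rule frac_ideal_nonzeroE)
  have "\<not> (\<forall>s\<in>F'. s = 0)"
  proof
    assume "\<forall>s\<in>F'. s = 0"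
    hence "dspan D F' \<subseteq> {0}" by (intro dspan_least) (auto simp: dsubmodule_def)
    thus False using e smul_mem[OF w(1), of d] w(2) d(2) by auto
  qed
  hence nz: "nz_subset F'" using F'D by (auto simp: nz_subset_def)
  obtain e' where e': "e' \<in> D" "e' \<noteq> 0" "star_span F' = smul e' D"
    using star_span_principal[OF _ nz] F(1) by (auto simp: F'_def)
  have "smul d J = smul e' D" using st_smul[OF d(2) J0(1)] J0(3) e e'(3) by simp
  hence "J = smul (inverse d * e') D" using smul_inverse[OF d(2), of J] by (simp add: smul_smul)
  thus "principal D J" unfolding principal_def using d(2) e'(2) by (intro exI[of _ "inverse d * e'"]) auto
qed

text \<open>The radical of \<open>x D\<^sub>Q \<inter> D\<close>.  It is prime because \<open>D\<^sub>Q\<close> is a valuation domain: of two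
  elements one divides the other in \<open>D\<^sub>Q\<close>.\<close>

definition loc_radical :: "'k \<Rightarrow> 'k set \<Rightarrow> 'k set" where
  "loc_radical x Q = {r \<in> D. \<exists>m. r ^ m \<in> smul x (localization D Q)}"

lemma loc_radical_subset_max:
  assumes "maximal_star_ideal D st Q" "x \<in> Q"
  shows "loc_radical x Q \<subseteq> Q"
  using smul_localization_D_subset_max[OF assms] max_power[OF assms(1)]
  by (auto simp: loc_radical_def)

lemma loc_radicalI: "r \<in> D \<Longrightarrow> r ^ m \<in> smul x (localization D Q) \<Longrightarrow> r \<in> loc_radical x Q"
  unfolding loc_radical_def by blast

lemma localization_quotient_cases:
  assumes "maximal_star_ideal D st Q" "a \<noteq> 0" "b \<noteq> 0"
  shows "b / a \<in> localization D Q \<or> a / b \<in> localization D Q"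
  using valuation_localization_max[OF assms(1)] assms(2,3) unfolding valuation_dom_def
  by (metis divide_eq_0_iff inverse_divide)

lemma loc_radical_mult:
  assumes Q: "maximal_star_ideal D st Q" and "d \<in> D" "r \<in> loc_radical x Q"
  shows "d * r \<in> loc_radical x Q"
proof -
  obtain m where m: "r \<in> D" "r ^ m \<in> smul x (localization D Q)" using assms(3) by (auto simp: loc_radical_def)
  have "(d * r) ^ m = r ^ m * d ^ m" by (simp add: power_mult_distrib mult.commute)
  hence "(d * r) ^ m \<in> smul x (localization D Q)"
    using smul_localization_mult[OF Q m(2) D_in_localization[OF Q D_power[OF assms(2)]]] by simp
  thus ?thesis using loc_radicalI assms(2) m(1) by blast
qed

lemma loc_radical_add:
  assumes Q: "maximal_star_ideal D st Q" and r: "r1 \<in> loc_radical x Q" "r2 \<in> loc_radical x Q"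
  shows "r1 + r2 \<in> loc_radical x Q"
proof -
  have main: "r1 + r2 \<in> loc_radical x Q"
    if h: "r1 \<in> loc_radical x Q" "r2 \<in> loc_radical x Q" "r2 / r1 \<in> localization D Q" "r1 \<noteq> 0" for r1 r2
  proof -
    obtain m where m: "r1 \<in> D" "r1 ^ m \<in> smul x (localization D Q)" using h(1) by (auto simp: loc_radical_def)
    have "(r1 + r2) ^ m = r1 ^ m * (1 + r2 / r1) ^ m"
      using h(4) by (simp add: power_mult_distrib[symmetric] field_simps)
    moreover have "(1 + r2 / r1) ^ m \<in> localization D Q"
      using localization_power[OF Q] localization_add[OF Q] D_in_localization[OF Q D_one] h(3) by simp
    ultimately have "(r1 + r2) ^ m \<in> smul x (localization D Q)" using smul_localization_mult[OF Q m(2)] by simp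
    thus ?thesis using loc_radicalI m(1) h(2) by (auto simp: loc_radical_def)
  qed
  show ?thesis
  proof (cases "r1 = 0 \<or> r2 = 0")
    case True thus ?thesis using r by auto
  next
    case False
    thus ?thesis using localization_quotient_cases[OF Q, of r1 r2] main[OF r] main[OF r(2,1)]
      by (auto simp: add.commute)
  qed
qed

lemma loc_radical_prime:
  assumes Q: "maximal_star_ideal D st Q" and "r1 \<in> D" "r2 \<in> D" "r1 * r2 \<in> loc_radical x Q"
  shows "r1 \<in> loc_radical x Q \<or> r2 \<in> loc_radical x Q"
proof -
  have main: "r2 \<in> loc_radical x Q"
    if h: "r1 * r2 \<in> loc_radical x Q" "r2 \<in> D" "r2 / r1 \<in> localization D Q" "r1 \<noteq> 0" for r1 r2
  proof -
    obtain m where m: "(r1 * r2) ^ m \<in> smul x (localization D Q)" using h(1) by (auto simp: loc_radical_def)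
    have "r2 ^ (2 * m) = (r1 * r2) ^ m * (r2 / r1) ^ m"
      using h(4) by (simp add: power_mult_distrib power_mult field_simps power2_eq_square)
    moreover have "(r2 / r1) ^ m \<in> localization D Q" using localization_power[OF Q h(3)] .
    ultimately have "r2 ^ (2 * m) \<in> smul x (localization D Q)" using smul_localization_mult[OF Q m] by simp
    thus ?thesis using loc_radicalI h(2) by blast
  qed
  show ?thesis
  proof (cases "r1 = 0 \<or> r2 = 0")
    case True thus ?thesis using assms(4) by auto
  next
    case False
    thus ?thesis using localization_quotient_cases[OF Q, of r1 r2] main[of r1 r2] main[of r2 r1] assms(2-4)
      by (auto simp: mult.commute)
  qed
qed

lemma prime_ideal_loc_radical:
  assumes Q: "maximal_star_ideal D st Q" and x: "x \<in> Q"
  shows "prime_ideal D (loc_radical x Q)"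
proof -
  have "0 \<in> loc_radical x Q"
    using loc_radicalI[of 0 1] smul_mem[OF D_in_localization[OF Q D_zero], of x] by simp
  hence "dsubmodule D (loc_radical x Q)"
    unfolding dsubmodule_def using loc_radical_add[OF Q] loc_radical_mult[OF Q] by blast
  moreover have "loc_radical x Q \<noteq> D" using loc_radical_subset_max[OF Q x] one_notin_max[OF Q] D_one by blast
  ultimately show ?thesis
    unfolding prime_ideal_def using loc_radical_prime[OF Q] by (auto simp: loc_radical_def)
qed

lemma separating_elem:
  assumes P: "maximal_star_ideal D st P" and Q: "maximal_star_ideal D st Q" and "P \<noteq> Q"
    and x: "x \<in> D" "x \<noteq> 0" "x \<in> Q"
  shows "\<exists>s\<in>D. s \<notin> P \<and> s \<in> smul x (localization D Q)"
proof -
  have "x \<in> loc_radical x Q"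
    using x(1) smul_mem[OF D_in_localization[OF Q D_one], of x] by (auto simp: loc_radical_def intro: exI[of _ 1])
  hence "loc_radical x Q \<noteq> {0}" using x(2) by auto
  hence "\<not> loc_radical x Q \<subseteq> P"
    using no_common_prime[OF P Q assms(3) prime_ideal_loc_radical[OF Q x(3)]] loc_radical_subset_max[OF Q x(3)]
    by blast
  then obtain r m where r: "r \<in> D" "r \<notin> P" "r ^ m \<in> smul x (localization D Q)"
    by (auto simp: loc_radical_def)
  thus ?thesis using max_power[OF P r(1)] D_power[OF r(1)] by blast
qed

lemma separating_elem_finite:
  assumes "finite A" "maximal_star_ideal D st P" "x \<in> D" "x \<noteq> 0"
    and "\<And>Q. Q \<in> A \<Longrightarrow> maximal_star_ideal D st Q \<and> Q \<noteq> P \<and> x \<in> Q"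
  shows "\<exists>s\<in>D. s \<notin> P \<and> (\<forall>Q\<in>A. s \<in> smul x (localization D Q))"
  using assms(1,5)
proof (induction A rule: finite_induct)
  case empty thus ?case using one_notin_max[OF assms(2)] D_one by blast
next
  case (insert Q A)
  then obtain s where s: "s \<in> D" "s \<notin> P" "\<forall>Q\<in>A. s \<in> smul x (localization D Q)" by blast
  have Q: "maximal_star_ideal D st Q" "Q \<noteq> P" "x \<in> Q" using insert.prems by auto
  obtain s' where s': "s' \<in> D" "s' \<notin> P" "s' \<in> smul x (localization D Q)"
    using separating_elem[OF assms(2) Q(1) Q(2)[symmetric] assms(3,4) Q(3)] by blast
  have "s * s' \<notin> P" using max_prime[OF assms(2) s(1) s'(1)] s(2) s'(2) by blast
  moreover have "s * s' \<in> smul x (localization D Q')" if "Q' \<in> insert Q A" for Q'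
  proof (cases "Q' = Q")
    case True
    thus ?thesis using smul_localization_mult[OF Q(1) s'(3) D_in_localization[OF Q(1) s(1)]]
      by (simp add: mult.commute)
  next
    case False
    hence "Q' \<in> A" "maximal_star_ideal D st Q'" using that insert.prems by auto
    thus ?thesis using smul_localization_mult[OF _ _ D_in_localization[OF _ s'(1)]] s(3) by blast
  qed
  ultimately show ?case using s(1) s'(1) by blast
qed

text \<open>Splitting off from \<open>x\<close> the part that lies in \<open>P\<close> only: choose \<open>s \<notin> P\<close> lying in \<open>x D\<^sub>Q\<close>
  for the other maximal *-ideals \<open>Q \<ni> x\<close>, and write \<open>x = g a\<close> with \<open>g = gcd(x, s)\<close>.\<close>

lemma split_off_unimax:
  assumes x: "x \<in> D" "x \<noteq> 0" and P: "maximal_star_ideal D st P" "x \<in> P"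
  obtains g a where "g \<in> D" "g \<noteq> 0" "unimax a" "x = g * a"
    "{Q. maximal_star_ideal D st Q \<and> g \<in> Q} = {Q. maximal_star_ideal D st Q \<and> x \<in> Q} - {P}"
proof -
  define rest where "rest = {Q. maximal_star_ideal D st Q \<and> x \<in> Q} - {P}"
  have "finite rest" using finite_max_containing[OF x] by (simp add: rest_def)
  then obtain s where s: "s \<in> D" "s \<notin> P" "\<forall>Q\<in>rest. s \<in> smul x (localization D Q)"
    using separating_elem_finite[OF _ P(1) x] by (auto simp: rest_def)
  have s0: "s \<noteq> 0" using nonzero_if_notin_max[OF P(1) s(2)] .
  obtain g a b where r: "g \<in> D" "g \<noteq> 0" "a \<in> D" "b \<in> D" "x = g * a" "s = g * b" "dcoprime a b"
    using gcd_decomp[OF is_gcd x(1) s(1) s0] by blast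
  have b0: "b \<noteq> 0" and a0: "a \<noteq> 0" using r(5,6) s0 x(2) by auto
  have cab: "star_span {a, b} = D" using star_span_pair_eq_D_if_dcoprime[OF r(3,4) b0 r(7)] .
  have gP: "g \<notin> P" using max_mult[OF P(1) _ r(4)] r(6) s(2) by auto
  have aP: "a \<in> P" using max_prime[OF P(1) r(1,3)] r(5) P(2) gP by auto
  have aQ: "a \<notin> Q" if Q: "Q \<in> rest" for Q
  proof
    assume aQ: "a \<in> Q"
    have MQ: "maximal_star_ideal D st Q" using Q by (simp add: rest_def)
    obtain v where v: "v \<in> localization D Q" "s = x * v" using s(3) Q by (auto simp: smul_def)
    have "b = a * v" using v(2) r(2,5,6) by simp
    hence "b \<in> smul a (localization D Q)" using smul_mem[OF v(1), of a] by simp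
    hence "b \<in> Q" using smul_localization_D_subset_max[OF MQ aQ r(4)] by blast
    thus False using star_coprime_not_both_in_max[OF cab nz_subset_pair[OF r(3,4) b0] MQ aQ] by simp
  qed
  have "unimax a"
  proof (rule unimaxI[OF r(3) a0 P(1) aP])
    fix Q assume Q: "maximal_star_ideal D st Q" "a \<in> Q"
    hence "x \<in> Q" using max_mult[OF Q(1) Q(2) r(1)] r(5) by (simp add: mult.commute)
    thus "Q = P" using aQ Q by (auto simp: rest_def)
  qed
  moreover have "{Q. maximal_star_ideal D st Q \<and> g \<in> Q} = rest"
  proof (intro set_eqI iffI)
    fix Q assume "Q \<in> {Q. maximal_star_ideal D st Q \<and> g \<in> Q}"
    thus "Q \<in> rest" using max_mult[of Q g a] r(3,5) gP by (auto simp: rest_def)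
  next
    fix Q assume Q: "Q \<in> rest"
    hence "maximal_star_ideal D st Q" "x \<in> Q" by (auto simp: rest_def)
    thus "Q \<in> {Q. maximal_star_ideal D st Q \<and> g \<in> Q}" using max_prime[OF _ r(1,3)] r(5) aQ[OF Q] by auto
  qed
  ultimately show ?thesis using that r(1,2,5) by (simp add: rest_def)
qed

lemma unimax_factorization_exists:
  assumes "x \<in> D" "x \<noteq> 0" "\<not> dunit D x"
  shows "\<exists>ys. ys \<noteq> [] \<and> (\<forall>y\<in>set ys. unimax y) \<and> prod_list ys = x"
  using assms
proof (induction "card {P. maximal_star_ideal D st P \<and> x \<in> P}" arbitrary: x rule: less_induct)
  case less
  obtain P where P: "maximal_star_ideal D st P" "x \<in> P" using nonunit_in_max[OF less.prems] by blast
  obtain g a where r: "g \<in> D" "g \<noteq> 0" "unimax a" "x = g * a"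
    and Mg: "{Q. maximal_star_ideal D st Q \<and> g \<in> Q} = {Q. maximal_star_ideal D st Q \<and> x \<in> Q} - {P}"
    using split_off_unimax[OF less.prems(1,2) P] by blast
  show ?case
  proof (cases "dunit D g")
    case True
    have "unimax (g * a)" using unimax_dunit_mult(1)[OF r(3) True] .
    thus ?thesis using r(4) by (intro exI[of _ "[x]"]) simp
  next
    case False
    have "card {Q. maximal_star_ideal D st Q \<and> g \<in> Q} < card {P. maximal_star_ideal D st P \<and> x \<in> P}"
      unfolding Mg using finite_max_containing[OF less.prems(1,2)] P by (intro card_Diff1_less) auto
    then obtain ys where "ys \<noteq> []" "\<forall>y\<in>set ys. unimax y" "prod_list ys = g"
      using less.hyps r(1,2) False by blast
    thus ?thesis using r(3,4) by (intro exI[of _ "a # ys"]) (auto simp: mult.commute)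
  qed
qed

lemma star_prod_fhomog_if_gcd_irkt:
  assumes "x \<in> D" "x \<noteq> 0" "smul x D \<noteq> D"
  shows "star_prod_fhomog D st x"
proof -
  have "\<not> dunit D x" using dunit_iff_smul_D[OF assms(1,2)] assms(3) by simp
  then obtain ys where ys: "\<forall>y\<in>set ys. unimax y" "prod_list ys = x"
    using unimax_factorization_exists[OF assms(1,2)] by blast
  have "\<forall>I\<in>set (map (\<lambda>y. smul y D) ys). star_f_homog D st I"
    using f_homog_elem_if_unimax[OF star_bezout_if_gcd_irkt] ys(1) by (auto simp: star_f_homog_elem_def)
  moreover have "smul x D = st (iprod_list D (map (\<lambda>y. smul y D) ys))"
    unfolding iprod_list_smul_D ys(2) using st_principal[OF assms(2)] by simp
  ultimately show ?thesis unfolding star_prod_fhomog_def by blast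
qed

end

theorem theoremS2:
  fixes D :: "'k::field set" and st :: "'k set \<Rightarrow> 'k set"
  assumes "domain_in D" and "star_op D st" and "finite_character D st"
  shows "((\<forall>x\<in>D. x \<noteq> 0 \<and> \<not> dunit D x \<longrightarrow> star_prod_fhomog D st x) \<longrightarrow>
            gcd_domain D \<and> star_IRKT D st \<and>
            (\<forall>x\<in>D. x \<noteq> 0 \<and> \<not> dunit D x \<longrightarrow>
               (\<exists>xs. comax_fhomog_fact D st x xs \<and>
                  (\<forall>ys. comax_fhomog_fact D st x ys \<longrightarrow>
                     length ys = length xs \<and>
                     (\<exists>\<sigma>. bij_betw \<sigma> {..<length xs} {..<length xs} \<and>
                        (\<forall>i<length xs. dassoc D (xs ! i) (ys ! \<sigma> i)))))))
       \<and> (gcd_domain D \<and> star_IRKT D st \<longrightarrow>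
            (\<forall>x\<in>D. x \<noteq> 0 \<and> smul x D \<noteq> D \<longrightarrow> star_prod_fhomog D st x))"
proof -
  interpret star_domain D st using assms by unfold_locales
  have converse: "star_prod_fhomog D st x"
    if "gcd_domain D" "star_IRKT D st" "x \<in> D" "x \<noteq> 0" "smul x D \<noteq> D" for x
  proof -
    interpret gcd_irkt D st using that(1,2) by unfold_locales
    show ?thesis using star_prod_fhomog_if_gcd_irkt that(3-5) .
  qed
  show ?thesis using factorization_if_star_prod_fhomog converse by blast
qed

end
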